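(* Let $\varphi(z,x,y)$ and $\psi(z,x,y)$ both satisfy Conditions (C1)–(C5) described in the context. Then each of the following functions also satisfies Conditions (C1)–(C5): (i) $\theta(z,x,y)=\varphi(z,x,y)+\psi(z,x,y)$; (ii) $\theta(z,x,y)=\varphi(z,x,y)b(x,y)$, where $b\in L_\infty(\Omega\times\Omega)$ and $0<c_5<b(x,y)<c_6$ for constants $c_5,c_6$; (iii) $\theta(z,x,y)=\varphi(z,x,y)\psi(z,x,y)$; (iv) $\theta(z,x,y)=\varphi(\psi(z,x,y),x,y)$.
   Context: Let $\Omega\subseteq\mathbb R^d$ be a domain; functions in $L_{1,loc}(\Omega)$ are complex-valued. A real function $r$ on $[0,\infty)$ is almost increasing (resp. almost decreasing) with constant $\beta\ge1$ if $r(s)\le\beta r(t)$ (resp. $\beta r(s)\ge r(t)$) for all $0\le s\le t$. For a function $\theta:[0,\infty)\times\Omega\times\Omega\to[0,\infty)$, the conditions are: (C1) for each $u\in L_{1,loc}(\Omega)$ the function $(x,y)\mapsto\theta(|u(x)-u(y)|,x,y)$ is measurable on $\Omega\times\Omega$; (C2) for every $\varepsilon>0$ there is $\delta\in(0,1)$ such that $\theta(\frac{s+t}{2},x,y)\le(1-\delta)\frac{\theta(s,x,y)+\theta(t,x,y)}{2}$ for a.e. $(x,y)$ and all $s,t>0$ with $|s-t|\ge\varepsilon\max\{s,t\}$; (C3) there are constants $1<p_-\le p_+$ and $\beta\ge1$ such that for a.e. $(x,y)$ the function $t\mapsto\theta(t,x,y)/t^{p_-}$ is almost increasing with constant $\beta$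 and $t\mapsto\theta(t,x,y)/t^{p_+}$ is almost decreasing with constant $\beta$; (C4) for a.e. $(x,y)$: $c_1^{-1}\le\theta(1,x,y)\le c_1$ with some constant $c_1>0$, $\theta(0,x,y)=0$, and $\theta(t,x,y)>0$ for $t>0$; (C5) for a.e. $(x,y)$, $\theta(t,x,y)$ is differentiable in $t>0$ and $0<t\theta'(t,x,y)\le c_2\theta(t,x,y)$ for $t>0$, with some constant $c_2>1$ independent of $t,x,y$. The constants in the conditions may differ between functions. *)

theory Defs
  imports "HOL-Analysis.Analysis"
begin

definition L1_loc :: "'a::euclidean_space set \<Rightarrow> ('a \<Rightarrow> complex) \<Rightarrow> bool" where
  "L1_loc \<Omega> u \<longleftrightarrow> u \<in> borel_measurable (lebesgue_on \<Omega>) \<and>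
     (\<forall>K. compact K \<longrightarrow> K \<subseteq> \<Omega> \<longrightarrow> integrable (lebesgue_on K) u)"

text \<open>Almost increasing / almost decreasing with constant \<beta>, on the open half-line
  (the quotients t \<mapsto> \<theta>(t)/t^p are only meaningful for t > 0).\<close>
definition almost_increasing :: "(real \<Rightarrow> real) \<Rightarrow> real \<Rightarrow> bool" where
  "almost_increasing r \<beta> \<longleftrightarrow> (\<forall>s t. 0 < s \<longrightarrow> s \<le> t \<longrightarrow> r s \<le> \<beta> * r t)"

definition almost_decreasing :: "(real \<Rightarrow> real) \<Rightarrow> real \<Rightarrow> bool" where
  "almost_decreasing r \<beta> \<longleftrightarrow> (\<forall>s t. 0 < s \<longrightarrow> s \<le> t \<longrightarrow> \<beta> * r s \<ge> r t)"

definition nonneg_on :: "'a set \<Rightarrow> (real \<Rightarrow> 'a \<Rightarrow> 'a \<Rightarrow> real) \<Rightarrow> bool" where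
  "nonneg_on \<Omega> \<theta> \<longleftrightarrow> (\<forall>t\<ge>0. \<forall>x\<in>\<Omega>. \<forall>y\<in>\<Omega>. 0 \<le> \<theta> t x y)"

definition C1 :: "'a::euclidean_space set \<Rightarrow> (real \<Rightarrow> 'a \<Rightarrow> 'a \<Rightarrow> real) \<Rightarrow> bool" where
  "C1 \<Omega> \<theta> \<longleftrightarrow> (\<forall>u. L1_loc \<Omega> u \<longrightarrow>
     (\<lambda>(x, y). \<theta> (cmod (u x - u y)) x y) \<in> borel_measurable (lebesgue_on (\<Omega> \<times> \<Omega>)))"

definition C2 :: "'a::euclidean_space set \<Rightarrow> (real \<Rightarrow> 'a \<Rightarrow> 'a \<Rightarrow> real) \<Rightarrow> bool" where
  "C2 \<Omega> \<theta> \<longleftrightarrow> (\<forall>\<epsilon>>0. \<exists>\<delta>. 0 < \<delta> \<and> \<delta> < 1 \<and>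
     (AE p in lebesgue_on (\<Omega> \<times> \<Omega>). \<forall>s t. 0 < s \<longrightarrow> 0 < t \<longrightarrow> \<bar>s - t\<bar> \<ge> \<epsilon> * max s t \<longrightarrow>
        \<theta> ((s + t) / 2) (fst p) (snd p) \<le> (1 - \<delta>) * ((\<theta> s (fst p) (snd p) + \<theta> t (fst p) (snd p)) / 2)))"

definition C3 :: "'a::euclidean_space set \<Rightarrow> (real \<Rightarrow> 'a \<Rightarrow> 'a \<Rightarrow> real) \<Rightarrow> bool" where
  "C3 \<Omega> \<theta> \<longleftrightarrow> (\<exists>pm pp \<beta>. 1 < pm \<and> pm \<le> pp \<and> 1 \<le> \<beta> \<and>
     (AE p in lebesgue_on (\<Omega> \<times> \<Omega>).
        almost_increasing (\<lambda>t. \<theta> t (fst p) (snd p) / t powr pm) \<beta> \<and>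
        almost_decreasing (\<lambda>t. \<theta> t (fst p) (snd p) / t powr pp) \<beta>))"

definition C4 :: "'a::euclidean_space set \<Rightarrow> (real \<Rightarrow> 'a \<Rightarrow> 'a \<Rightarrow> real) \<Rightarrow> bool" where
  "C4 \<Omega> \<theta> \<longleftrightarrow> (\<exists>c1>0. AE p in lebesgue_on (\<Omega> \<times> \<Omega>).
     inverse c1 \<le> \<theta> 1 (fst p) (snd p) \<and> \<theta> 1 (fst p) (snd p) \<le> c1 \<and>
     \<theta> 0 (fst p) (snd p) = 0 \<and> (\<forall>t>0. 0 < \<theta> t (fst p) (snd p)))"

definition C5 :: "'a::euclidean_space set \<Rightarrow> (real \<Rightarrow> 'a \<Rightarrow> 'a \<Rightarrow> real) \<Rightarrow> bool" where
  "C5 \<Omega> \<theta> \<longleftrightarrow> (\<exists>c2>1. AE p in lebesgue_on (\<Omega> \<times> \<Omega>).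
     \<forall>t>0. \<exists>D. ((\<lambda>z. \<theta> z (fst p) (snd p)) has_real_derivative D) (at t) \<and>
        0 < t * D \<and> t * D \<le> c2 * \<theta> t (fst p) (snd p))"

definition conditions_C :: "'a::euclidean_space set \<Rightarrow> (real \<Rightarrow> 'a \<Rightarrow> 'a \<Rightarrow> real) \<Rightarrow> bool" where
  "conditions_C \<Omega> \<theta> \<longleftrightarrow> nonneg_on \<Omega> \<theta> \<and> C1 \<Omega> \<theta> \<and> C2 \<Omega> \<theta> \<and> C3 \<Omega> \<theta> \<and> C4 \<Omega> \<theta> \<and> C5 \<Omega> \<theta>"

end

theory Submission
  imports Defs
begin

text \<open>Conditions (C2)--(C5) are statements about the profiles \<open>t \<mapsto> \<theta>(t, x, y)\<close> for almost
  every \<open>(x, y)\<close>. The power bounds (C3), the normalisation (C4) and the bound \<open>t \<theta>' \<le> c\<^sub>2 \<theta>\<close> of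
  (C5) survive the four operations with explicit constants: exponents add under products and
  multiply under composition. For (C2), a product of two increasing factors is handled by
  Chebyshev's inequality \<open>((a + b) / 2) ((c + d) / 2) \<le> (a c + b d) / 2\<close> for similarly ordered
  pairs; for \<open>\<phi>(\<psi>)\<close>, (C2) for \<open>\<psi>\<close> puts \<open>\<psi>\<close> at the midpoint a fixed proportion below its larger
  endpoint value, and the growth bound \<open>\<phi>(b) a\<^sup>c\<^sup>2 \<le> \<phi>(a) b\<^sup>c\<^sup>2\<close> implied by (C5) turns this into a
  fixed gain for \<open>\<phi>\<close>. The only measure-theoretic point is (C1) for \<open>\<phi>(\<psi>)\<close>: testing (C1) with
  step functions shows that every \<open>\<phi>(t, \<cdot>, \<cdot>)\<close> is measurable, and since \<open>\<phi>\<close> is continuous in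
  \<open>t\<close> the composition is measurable.\<close>

section \<open>Almost monotone quotients\<close>

lemma almost_increasing_cong:
  "almost_increasing r \<beta> \<Longrightarrow> (\<And>t. 0 < t \<Longrightarrow> r t = r' t) \<Longrightarrow> almost_increasing r' \<beta>"
  unfolding almost_increasing_def by (metis less_le_trans)

lemma almost_decreasing_cong:
  "almost_decreasing r \<beta> \<Longrightarrow> (\<And>t. 0 < t \<Longrightarrow> r t = r' t) \<Longrightarrow> almost_decreasing r' \<beta>"
  unfolding almost_decreasing_def by (metis less_le_trans)

lemma almost_increasing_weaken:
  assumes "almost_increasing r \<beta>" "\<beta> \<le> \<beta>'" "\<And>t. 0 < t \<Longrightarrow> 0 \<le> r t"
  shows "almost_increasing r \<beta>'"
  unfolding almost_increasing_def
proof (intro allI impI)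
  fix s t :: real assume st: "0 < s" "s \<le> t"
  have "r s \<le> \<beta> * r t" using assms(1) st unfolding almost_increasing_def by blast
  also have "\<dots> \<le> \<beta>' * r t" using assms st by (intro mult_right_mono) auto
  finally show "r s \<le> \<beta>' * r t" .
qed

lemma almost_increasing_add:
  assumes "almost_increasing r \<beta>" "almost_increasing r' \<beta>'"
    and "\<And>t. 0 < t \<Longrightarrow> 0 \<le> r t" "\<And>t. 0 < t \<Longrightarrow> 0 \<le> r' t"
  shows "almost_increasing (\<lambda>t. r t + r' t) (max \<beta> \<beta>')"
proof -
  have "almost_increasing r (max \<beta> \<beta>')" "almost_increasing r' (max \<beta> \<beta>')"
    using assms by (auto intro: almost_increasing_weaken)
  then show ?thesis unfolding almost_increasing_def by (fastforce simp: distrib_left intro: add_mono)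
qed

lemma almost_decreasing_add:
  assumes "almost_decreasing r \<beta>" "almost_decreasing r' \<beta>'"
    and "\<And>t. 0 < t \<Longrightarrow> 0 \<le> r t" "\<And>t. 0 < t \<Longrightarrow> 0 \<le> r' t"
  shows "almost_decreasing (\<lambda>t. r t + r' t) (max \<beta> \<beta>')"
proof -
  have "r t \<le> max \<beta> \<beta>' * r s" "r' t \<le> max \<beta> \<beta>' * r' s" if "0 < s" "s \<le> t" for s t
  proof -
    have "r t \<le> \<beta> * r s" "r' t \<le> \<beta>' * r' s"
      using assms that unfolding almost_decreasing_def by auto
    moreover have "\<beta> * r s \<le> max \<beta> \<beta>' * r s" "\<beta>' * r' s \<le> max \<beta> \<beta>' * r' s"
      using assms that by (auto intro: mult_right_mono)
    ultimately show "r t \<le> max \<beta> \<beta>' * r s" "r' t \<le> max \<beta> \<beta>' * r' s" by linarith+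
  qed
  then show ?thesis unfolding almost_decreasing_def by (fastforce simp: distrib_left intro: add_mono)
qed

lemma almost_increasing_mult:
  assumes "almost_increasing r \<beta>" "almost_increasing r' \<beta>'" "0 \<le> \<beta>"
    and "\<And>t. 0 < t \<Longrightarrow> 0 \<le> r t" "\<And>t. 0 < t \<Longrightarrow> 0 \<le> r' t"
  shows "almost_increasing (\<lambda>t. r t * r' t) (\<beta> * \<beta>')"
  unfolding almost_increasing_def
proof (intro allI impI)
  fix s t :: real assume st: "0 < s" "s \<le> t"
  have "r s \<le> \<beta> * r t" "r' s \<le> \<beta>' * r' t" using assms st unfolding almost_increasing_def by auto
  moreover have "0 \<le> \<beta> * r t" "0 \<le> r' s" using assms st by auto
  ultimately have "r s * r' s \<le> (\<beta> * r t) * (\<beta>' * r' t)" by (intro mult_mono)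
  then show "r s * r' s \<le> \<beta> * \<beta>' * (r t * r' t)" by (simp add: ac_simps)
qed

lemma almost_decreasing_mult:
  assumes "almost_decreasing r \<beta>" "almost_decreasing r' \<beta>'" "0 \<le> \<beta>"
    and "\<And>t. 0 < t \<Longrightarrow> 0 \<le> r t" "\<And>t. 0 < t \<Longrightarrow> 0 \<le> r' t"
  shows "almost_decreasing (\<lambda>t. r t * r' t) (\<beta> * \<beta>')"
  unfolding almost_decreasing_def
proof (intro allI impI)
  fix s t :: real assume st: "0 < s" "s \<le> t"
  have "r t \<le> \<beta> * r s" "r' t \<le> \<beta>' * r' s" using assms st unfolding almost_decreasing_def by auto
  moreover have "0 \<le> \<beta> * r s" "0 \<le> r' t" using assms st by auto
  ultimately have "r t * r' t \<le> (\<beta> * r s) * (\<beta>' * r' s)" by (intro mult_mono)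
  then show "\<beta> * \<beta>' * (r s * r' s) \<ge> r t * r' t" by (simp add: ac_simps)
qed

lemma almost_increasing_mult_const:
  "almost_increasing r \<beta> \<Longrightarrow> 0 \<le> k \<Longrightarrow> almost_increasing (\<lambda>t. r t * k) \<beta>"
  unfolding almost_increasing_def by (metis mult.assoc mult_right_mono)

lemma almost_decreasing_mult_const:
  "almost_decreasing r \<beta> \<Longrightarrow> 0 \<le> k \<Longrightarrow> almost_decreasing (\<lambda>t. r t * k) \<beta>"
  unfolding almost_decreasing_def by (metis mult.assoc mult_right_mono)

lemma almost_increasing_div_powr_smaller:
  assumes "almost_increasing (\<lambda>t. f t / t powr p) \<beta>" "q \<le> p" "0 \<le> \<beta>" "\<And>t. 0 < t \<Longrightarrow> 0 \<le> f t"
  shows "almost_increasing (\<lambda>t. f t / t powr q) \<beta>"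
  unfolding almost_increasing_def
proof (intro allI impI)
  fix s t :: real assume st: "0 < s" "s \<le> t"
  have "f s / s powr q = (f s / s powr p) * s powr (p - q)" using st by (simp add: powr_diff)
  also have "\<dots> \<le> (\<beta> * (f t / t powr p)) * s powr (p - q)"
    using assms(1) st unfolding almost_increasing_def by (intro mult_right_mono) auto
  also have "\<dots> \<le> (\<beta> * (f t / t powr p)) * t powr (p - q)"
    using assms st by (intro mult_left_mono powr_mono2) auto
  also have "\<dots> = \<beta> * (f t / t powr q)" using st by (simp add: powr_diff)
  finally show "f s / s powr q \<le> \<beta> * (f t / t powr q)" .
qed

lemma almost_decreasing_div_powr_larger:
  assumes "almost_decreasing (\<lambda>t. f t / t powr p) \<beta>" "p \<le> q" "0 \<le> \<beta>" "\<And>t. 0 < t \<Longrightarrow> 0 \<le> f t"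
  shows "almost_decreasing (\<lambda>t. f t / t powr q) \<beta>"
  unfolding almost_decreasing_def
proof (intro allI impI)
  fix s t :: real assume st: "0 < s" "s \<le> t"
  have "f t / t powr q = (f t / t powr p) / t powr (q - p)" using st by (simp add: powr_diff)
  also have "\<dots> \<le> (\<beta> * (f s / s powr p)) / t powr (q - p)"
    using assms(1) st unfolding almost_decreasing_def by (intro divide_right_mono) auto
  also have "\<dots> \<le> (\<beta> * (f s / s powr p)) / s powr (q - p)"
    using assms st by (intro divide_left_mono powr_mono2 mult_pos_pos) auto
  also have "\<dots> = \<beta> * (f s / s powr q)" using st by (simp add: powr_diff)
  finally show "\<beta> * (f s / s powr q) \<ge> f t / t powr q" .
qed

lemma almost_increasing_compose:
  fixes f g :: "real \<Rightarrow> real"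
  assumes f: "almost_increasing (\<lambda>t. f t / t powr p) \<beta>f"
    and g: "almost_increasing (\<lambda>t. g t / t powr q) \<beta>g"
    and g_mono: "\<And>s t. 0 < s \<Longrightarrow> s \<le> t \<Longrightarrow> g s \<le> g t" and g_pos: "\<And>t. 0 < t \<Longrightarrow> 0 < g t"
    and f_nonneg: "\<And>t. 0 < t \<Longrightarrow> 0 \<le> f t" and "0 \<le> p" "0 \<le> \<beta>f"
  shows "almost_increasing (\<lambda>t. f (g t) / t powr (q * p)) (\<beta>f * \<beta>g powr p)"
  unfolding almost_increasing_def
proof (intro allI impI)
  fix s t :: real assume st: "0 < s" "s \<le> t"
  have gs: "0 < g s" "g s \<le> g t" using g_pos g_mono st by auto
  have split: "f (g r) / r powr (q * p) = (f (g r) / g r powr p) * (g r / r powr q) powr p"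
    if "0 < r" for r using that g_pos[OF that] by (simp add: powr_divide powr_powr)
  have f_le: "f (g s) / g s powr p \<le> \<beta>f * (f (g t) / g t powr p)"
    using f gs unfolding almost_increasing_def by auto
  have g_le: "g s / s powr q \<le> \<beta>g * (g t / t powr q)"
    using g st unfolding almost_increasing_def by auto
  have "0 < g s / s powr q" "0 < g t / t powr q" using gs st by auto
  with g_le have "0 < \<beta>g * (g t / t powr q)" by linarith
  then have "0 < \<beta>g" using \<open>0 < g t / t powr q\<close> by (metis mult_nonpos_nonneg not_le less_imp_le)
  have "(g s / s powr q) powr p \<le> (\<beta>g * (g t / t powr q)) powr p"
    using g_le gs st \<open>0 \<le> p\<close> by (intro powr_mono2) auto
  also have "\<dots> = \<beta>g powr p * (g t / t powr q) powr p"
    using \<open>0 < \<beta>g\<close> gs st by (subst powr_mult) auto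
  finally have g_le_p: "(g s / s powr q) powr p \<le> \<beta>g powr p * (g t / t powr q) powr p" .
  have "f (g s) / s powr (q * p) \<le> (\<beta>f * (f (g t) / g t powr p)) * (\<beta>g powr p * (g t / t powr q) powr p)"
    unfolding split[OF st(1)] using f_nonneg gs \<open>0 \<le> \<beta>f\<close>
    by (intro mult_mono[OF f_le g_le_p]) auto
  also have "\<dots> = \<beta>f * \<beta>g powr p * (f (g t) / t powr (q * p))"
    using split st by (simp add: ac_simps)
  finally show "f (g s) / s powr (q * p) \<le> \<beta>f * \<beta>g powr p * (f (g t) / t powr (q * p))" .
qed

lemma almost_decreasing_compose:
  fixes f g :: "real \<Rightarrow> real"
  assumes f: "almost_decreasing (\<lambda>t. f t / t powr p) \<beta>f"
    and g: "almost_decreasing (\<lambda>t. g t / t powr q) \<beta>g"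
    and g_mono: "\<And>s t. 0 < s \<Longrightarrow> s \<le> t \<Longrightarrow> g s \<le> g t" and g_pos: "\<And>t. 0 < t \<Longrightarrow> 0 < g t"
    and f_nonneg: "\<And>t. 0 < t \<Longrightarrow> 0 \<le> f t" and "0 \<le> p" "0 \<le> \<beta>f"
  shows "almost_decreasing (\<lambda>t. f (g t) / t powr (q * p)) (\<beta>f * \<beta>g powr p)"
  unfolding almost_decreasing_def
proof (intro allI impI)
  fix s t :: real assume st: "0 < s" "s \<le> t"
  have gs: "0 < g s" "g s \<le> g t" using g_pos g_mono st by auto
  have split: "f (g r) / r powr (q * p) = (f (g r) / g r powr p) * (g r / r powr q) powr p"
    if "0 < r" for r using that g_pos[OF that] by (simp add: powr_divide powr_powr)
  have f_le: "f (g t) / g t powr p \<le> \<beta>f * (f (g s) / g s powr p)"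
    using f gs unfolding almost_decreasing_def by auto
  have g_le: "g t / t powr q \<le> \<beta>g * (g s / s powr q)"
    using g st unfolding almost_decreasing_def by auto
  have "0 < g s / s powr q" "0 < g t / t powr q" using gs st by auto
  with g_le have "0 < \<beta>g * (g s / s powr q)" by linarith
  then have "0 < \<beta>g" using \<open>0 < g s / s powr q\<close> by (metis mult_nonpos_nonneg not_le less_imp_le)
  have "(g t / t powr q) powr p \<le> (\<beta>g * (g s / s powr q)) powr p"
    using g_le gs st \<open>0 \<le> p\<close> by (intro powr_mono2) auto
  also have "\<dots> = \<beta>g powr p * (g s / s powr q) powr p"
    using \<open>0 < \<beta>g\<close> gs st by (subst powr_mult) auto
  finally have g_le_p: "(g t / t powr q) powr p \<le> \<beta>g powr p * (g s / s powr q) powr p" .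
  have "f (g t) / t powr (q * p) \<le> (\<beta>f * (f (g s) / g s powr p)) * (\<beta>g powr p * (g s / s powr q) powr p)"
    unfolding split[OF less_le_trans[OF st]] using f_nonneg gs \<open>0 \<le> \<beta>f\<close>
    by (intro mult_mono[OF f_le g_le_p]) auto
  also have "\<dots> = \<beta>f * \<beta>g powr p * (f (g s) / s powr (q * p))"
    using split st by (simp add: ac_simps)
  finally show "\<beta>f * \<beta>g powr p * (f (g s) / s powr (q * p)) \<ge> f (g t) / t powr (q * p)" .
qed

lemma pos_deriv_imp_increasing_on_pos:
  fixes f :: "real \<Rightarrow> real"
  assumes deriv: "\<And>t. 0 < t \<Longrightarrow> \<exists>D. (f has_real_derivative D) (at t) \<and> 0 < D"
    and "0 < s" "s \<le> t"
  shows "f s \<le> f t"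
proof (cases "s = t")
  case False
  have "f s < f t"
  proof (rule DERIV_pos_imp_increasing[where f = f])
    show "s < t" using False assms by simp
    fix x assume "s \<le> x" "x \<le> t"
    then show "\<exists>y. (f has_real_derivative y) (at x) \<and> 0 < y" using deriv assms by simp
  qed
  then show ?thesis by simp
qed simp

lemma log_deriv_bound_imp_powr_growth:
  fixes f :: "real \<Rightarrow> real"
  assumes deriv: "\<And>t. 0 < t \<Longrightarrow> \<exists>D. (f has_real_derivative D) (at t) \<and> t * D \<le> c * f t"
    and pos: "\<And>t. 0 < t \<Longrightarrow> 0 < f t"
    and ab: "0 < a" "a \<le> b"
  shows "f b * a powr c \<le> f a * b powr c"
proof -
  define g where "g t = ln (f t) - c * ln t" for t
  have g_deriv: "\<exists>y. (g has_real_derivative y) (at x) \<and> y \<le> 0" if "0 < x" for x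
  proof -
    obtain D where D: "(f has_real_derivative D) (at x)" "x * D \<le> c * f x" using deriv \<open>0 < x\<close> by blast
    have fx: "0 < f x" using pos \<open>0 < x\<close> by blast
    have "(g has_real_derivative D / f x - c / x) (at x)"
      unfolding g_def[abs_def]
      by (rule derivative_eq_intros refl D fx \<open>0 < x\<close> | simp add: fx \<open>0 < x\<close>)+
    moreover have "D / f x - c / x = (x * D - c * f x) / (x * f x)"
      using fx \<open>0 < x\<close> by (simp add: field_simps)
    moreover have "(x * D - c * f x) / (x * f x) \<le> 0"
      using D(2) fx \<open>0 < x\<close> by (intro divide_nonpos_pos) auto
    ultimately show ?thesis by auto
  qed
  have "g b \<le> g a"
  proof (rule DERIV_nonpos_imp_decreasing_open[OF ab(2)])
    fix x assume "a < x" "x < b"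
    then show "\<exists>y. (g has_real_derivative y) (at x) \<and> y \<le> 0" using g_deriv ab by simp
  next
    show "continuous_on {a..b} g"
      by (rule continuous_at_imp_continuous_on, rule ballI)
        (metis DERIV_isCont g_deriv ab(1) atLeastAtMost_iff less_le_trans)
  qed
  then have "exp (ln (f b) + c * ln a) \<le> exp (ln (f a) + c * ln b)" unfolding g_def by simp
  then show ?thesis using pos ab by (simp add: exp_add powr_def mult.commute)
qed

section \<open>Admissible profiles\<close>

definition admissible_profile :: "(real \<Rightarrow> real) \<Rightarrow> real \<Rightarrow> real \<Rightarrow> real \<Rightarrow> real \<Rightarrow> real \<Rightarrow> bool" where
  "admissible_profile f c1 c2 pm pp \<beta> \<longleftrightarrow>
     inverse c1 \<le> f 1 \<and> f 1 \<le> c1 \<and> f 0 = 0 \<and> (\<forall>t>0. 0 < f t) \<and>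
     (\<forall>t>0. \<exists>D. (f has_real_derivative D) (at t) \<and> 0 < t * D \<and> t * D \<le> c2 * f t) \<and>
     almost_increasing (\<lambda>t. f t / t powr pm) \<beta> \<and> almost_decreasing (\<lambda>t. f t / t powr pp) \<beta>"

context
  fixes f :: "real \<Rightarrow> real" and c1 c2 pm pp \<beta> :: real
  assumes f: "admissible_profile f c1 c2 pm pp \<beta>"
begin

lemma admissible_profile_bounds_at_one: "inverse c1 \<le> f 1" "f 1 \<le> c1"
  using f unfolding admissible_profile_def by auto

lemma admissible_profile_zero: "f 0 = 0"
  using f unfolding admissible_profile_def by auto

lemma admissible_profile_pos: "0 < t \<Longrightarrow> 0 < f t"
  using f unfolding admissible_profile_def by auto

lemma admissible_profile_deriv:
  "0 < t \<Longrightarrow> \<exists>D. (f has_real_derivative D) (at t) \<and> 0 < t * D \<and> t * D \<le> c2 * f t"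
  using f unfolding admissible_profile_def by auto

lemma admissible_profile_isCont: "0 < t \<Longrightarrow> isCont f t"
  using admissible_profile_deriv DERIV_isCont by blast

lemma admissible_profile_almost_increasing: "almost_increasing (\<lambda>t. f t / t powr pm) \<beta>"
  using f unfolding admissible_profile_def by auto

lemma admissible_profile_almost_decreasing: "almost_decreasing (\<lambda>t. f t / t powr pp) \<beta>"
  using f unfolding admissible_profile_def by auto

lemma admissible_profile_const_ge_one: "1 \<le> c1"
proof -
  have "0 < c1" using admissible_profile_pos[of 1] admissible_profile_bounds_at_one by simp
  moreover have "inverse c1 \<le> c1" using admissible_profile_bounds_at_one by simp
  ultimately show ?thesis
    using one_less_inverse[of c1] by linarith
qed

lemma admissible_profile_exponent_pos: "0 < c2"
proof -
  obtain D where "0 < 1 * D" "1 * D \<le> c2 * f 1" using admissible_profile_deriv[of 1] by auto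
  then have "0 < c2 * f 1" by linarith
  then show ?thesis using admissible_profile_pos[of 1] by (simp add: zero_less_mult_iff)
qed

lemma admissible_profile_mono:
  assumes "0 < s" "s \<le> t"
  shows "f s \<le> f t"
proof (rule pos_deriv_imp_increasing_on_pos[where f = f, OF _ assms])
  fix x :: real assume "0 < x"
  then obtain D where "(f has_real_derivative D) (at x)" "0 < x * D" using admissible_profile_deriv by blast
  with \<open>0 < x\<close> show "\<exists>D. (f has_real_derivative D) (at x) \<and> 0 < D" by (auto simp: zero_less_mult_iff)
qed

lemma admissible_profile_growth:
  assumes "0 < a" "a \<le> b"
  shows "f b * a powr c2 \<le> f a * b powr c2"
proof (rule log_deriv_bound_imp_powr_growth[OF _ admissible_profile_pos assms])
  fix t :: real assume "0 < t"
  then show "\<exists>D. (f has_real_derivative D) (at t) \<and> t * D \<le> c2 * f t"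
    using admissible_profile_deriv by blast
qed

lemma admissible_profile_value_bounds:
  assumes "1 \<le> K" "inverse K \<le> v" "v \<le> K"
  shows "inverse (c1 * K powr c2) \<le> f v" "f v \<le> c1 * K powr c2"
proof -
  have K: "0 < K" using assms by simp
  have v: "0 < v" using assms(2) K by (meson inverse_positive_iff_positive less_le_trans)
  have f1: "0 < f 1" using admissible_profile_pos by simp
  have c2: "0 < c2" by (rule admissible_profile_exponent_pos)
  have Kc: "1 \<le> K powr c2" using assms c2 by (simp add: ge_one_powr_ge_zero)
  have iKc: "inverse K powr c2 \<le> 1" using Kc K by (simp add: inverse_powr inverse_le_1_iff)
  have inv_eq: "inverse (c1 * K powr c2) = inverse c1 * inverse K powr c2"
    using K by (simp add: inverse_mult_distrib inverse_powr)
  note at_one = admissible_profile_bounds_at_one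
  show "inverse (c1 * K powr c2) \<le> f v"
  proof (cases "1 \<le> v")
    case True
    have "inverse c1 * inverse K powr c2 \<le> f 1 * 1"
      using at_one iKc f1 by (intro mult_mono) auto
    also have "\<dots> \<le> f v" using admissible_profile_mono True by simp
    finally show ?thesis unfolding inv_eq .
  next
    case False
    have "inverse c1 * inverse K powr c2 \<le> f 1 * v powr c2"
      using at_one f1 assms c2 by (intro mult_mono powr_mono2) auto
    also have "\<dots> \<le> f v" using admissible_profile_growth[of v 1] v False by simp
    finally show ?thesis unfolding inv_eq .
  qed
  show "f v \<le> c1 * K powr c2"
  proof (cases "1 \<le> v")
    case True
    have "f v \<le> f 1 * v powr c2" using admissible_profile_growth[of 1 v] True by simp
    also have "\<dots> \<le> c1 * K powr c2" using at_one f1 assms v c2 by (intro mult_mono powr_mono2) auto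
    finally show ?thesis .
  next
    case False
    have "f v \<le> f 1" using admissible_profile_mono v False by simp
    also have "\<dots> \<le> c1" using at_one by simp
    also have "\<dots> \<le> c1 * K powr c2"
      using Kc admissible_profile_const_ge_one by (simp add: mult_le_cancel_left1)
    finally show ?thesis .
  qed
qed

end

lemma admissible_profile_add:
  assumes f: "admissible_profile f c1 c2 pm pp \<beta>" and g: "admissible_profile g c1' c2' pm' pp' \<beta>'"
    and "0 \<le> \<beta>" "0 \<le> \<beta>'"
  shows "admissible_profile (\<lambda>t. f t + g t) (c1 + c1') (max c2 c2') (min pm pm') (max pp pp') (max \<beta> \<beta>')"
  unfolding admissible_profile_def
proof (intro conjI allI impI)
  note f_one = admissible_profile_bounds_at_one[OF f] and g_one = admissible_profile_bounds_at_one[OF g]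
  note f_pos = admissible_profile_pos[OF f] and g_pos = admissible_profile_pos[OF g]
  have "inverse (c1 + c1') \<le> inverse c1"
    using admissible_profile_const_ge_one[OF f] g_one g_pos[of 1] by (intro le_imp_inverse_le) auto
  then show "inverse (c1 + c1') \<le> f 1 + g 1" using f_one g_pos[of 1] by linarith
  show "f 1 + g 1 \<le> c1 + c1'" using f_one g_one by simp
  show "f 0 + g 0 = 0" by (simp add: admissible_profile_zero[OF f] admissible_profile_zero[OF g])
  show "0 < f t + g t" if "0 < t" for t using f_pos g_pos that by (simp add: add_pos_pos)
  show "\<exists>D. ((\<lambda>t. f t + g t) has_real_derivative D) (at t) \<and> 0 < t * D \<and> t * D \<le> max c2 c2' * (f t + g t)"
    if t: "0 < t" for t
  proof -
    obtain D1 where D1: "(f has_real_derivative D1) (at t)" "0 < t * D1" "t * D1 \<le> c2 * f t"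
      using admissible_profile_deriv[OF f t] by blast
    obtain D2 where D2: "(g has_real_derivative D2) (at t)" "0 < t * D2" "t * D2 \<le> c2' * g t"
      using admissible_profile_deriv[OF g t] by blast
    have "c2 * f t \<le> max c2 c2' * f t" "c2' * g t \<le> max c2 c2' * g t"
      using f_pos g_pos t by (auto intro!: mult_right_mono less_imp_le)
    then have "t * (D1 + D2) \<le> max c2 c2' * (f t + g t)" using D1 D2 by (simp add: distrib_left)
    moreover have "0 < t * (D1 + D2)" using D1 D2 by (simp add: distrib_left)
    ultimately show ?thesis using DERIV_add[OF D1(1) D2(1)] by blast
  qed
  have f_nonneg: "0 \<le> f t" and g_nonneg: "0 \<le> g t" if "0 < t" for t
    using f_pos g_pos that by (auto intro: less_imp_le)
  have "almost_increasing (\<lambda>t. f t / t powr min pm pm' + g t / t powr min pm pm') (max \<beta> \<beta>')"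
    using f_nonneg g_nonneg assms
    by (intro almost_increasing_add
        almost_increasing_div_powr_smaller[OF admissible_profile_almost_increasing[OF f]]
        almost_increasing_div_powr_smaller[OF admissible_profile_almost_increasing[OF g]]) auto
  then show "almost_increasing (\<lambda>t. (f t + g t) / t powr min pm pm') (max \<beta> \<beta>')"
    by (simp add: add_divide_distrib)
  have "almost_decreasing (\<lambda>t. f t / t powr max pp pp' + g t / t powr max pp pp') (max \<beta> \<beta>')"
    using f_nonneg g_nonneg assms
    by (intro almost_decreasing_add
        almost_decreasing_div_powr_larger[OF admissible_profile_almost_decreasing[OF f]]
        almost_decreasing_div_powr_larger[OF admissible_profile_almost_decreasing[OF g]]) auto
  then show "almost_decreasing (\<lambda>t. (f t + g t) / t powr max pp pp') (max \<beta> \<beta>')"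
    by (simp add: add_divide_distrib)
qed

lemma admissible_profile_mult_const:
  assumes f: "admissible_profile f c1 c2 pm pp \<beta>" and k: "0 < k" "k \<le> K" "inverse K \<le> k"
  shows "admissible_profile (\<lambda>t. f t * k) (c1 * K) c2 pm pp \<beta>"
  unfolding admissible_profile_def
proof (intro conjI allI impI)
  note f_one = admissible_profile_bounds_at_one[OF f] and f_pos = admissible_profile_pos[OF f]
  have "0 < K" "0 < c1" using k f_one f_pos[of 1] by auto
  then show "inverse (c1 * K) \<le> f 1 * k"
    using f_one k f_pos[of 1] by (simp add: inverse_mult_distrib) (intro mult_mono, auto)
  show "f 1 * k \<le> c1 * K" using f_one f_pos[of 1] k by (intro mult_mono) auto
  show "f 0 * k = 0" by (simp add: admissible_profile_zero[OF f])
  show "0 < f t * k" if "0 < t" for t using f_pos that k by simp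
  show "\<exists>D. ((\<lambda>t. f t * k) has_real_derivative D) (at t) \<and> 0 < t * D \<and> t * D \<le> c2 * (f t * k)"
    if t: "0 < t" for t
  proof -
    obtain D where D: "(f has_real_derivative D) (at t)" "0 < t * D" "t * D \<le> c2 * f t"
      using admissible_profile_deriv[OF f t] by blast
    have "t * D * k \<le> c2 * f t * k" using D k by (intro mult_right_mono) auto
    moreover have "0 < t * D * k" using D k by simp
    ultimately show ?thesis using DERIV_cmult_right[OF D(1), of k] by (intro exI[of _ "D * k"]) (simp add: ac_simps)
  qed
  show "almost_increasing (\<lambda>t. f t * k / t powr pm) \<beta>"
    using almost_increasing_mult_const[OF admissible_profile_almost_increasing[OF f], of k] k
    by (simp add: ac_simps)
  show "almost_decreasing (\<lambda>t. f t * k / t powr pp) \<beta>"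
    using almost_decreasing_mult_const[OF admissible_profile_almost_decreasing[OF f], of k] k
    by (simp add: ac_simps)
qed

lemma admissible_profile_mult:
  assumes f: "admissible_profile f c1 c2 pm pp \<beta>" and g: "admissible_profile g c1' c2' pm' pp' \<beta>'"
    and "0 \<le> \<beta>"
  shows "admissible_profile (\<lambda>t. f t * g t) (c1 * c1') (c2 + c2') (pm + pm') (pp + pp') (\<beta> * \<beta>')"
  unfolding admissible_profile_def
proof (intro conjI allI impI)
  note f_one = admissible_profile_bounds_at_one[OF f] and g_one = admissible_profile_bounds_at_one[OF g]
  note f_pos = admissible_profile_pos[OF f] and g_pos = admissible_profile_pos[OF g]
  have "0 < c1" "0 < c1'" using f_one g_one f_pos[of 1] g_pos[of 1] by auto
  then show "inverse (c1 * c1') \<le> f 1 * g 1"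
    using f_one g_one f_pos[of 1] by (simp add: inverse_mult_distrib) (intro mult_mono, auto)
  show "f 1 * g 1 \<le> c1 * c1'" using f_one g_one f_pos[of 1] g_pos[of 1] by (intro mult_mono) auto
  show "f 0 * g 0 = 0" by (simp add: admissible_profile_zero[OF f])
  show "0 < f t * g t" if "0 < t" for t using f_pos g_pos that by simp
  show "\<exists>D. ((\<lambda>t. f t * g t) has_real_derivative D) (at t) \<and> 0 < t * D \<and> t * D \<le> (c2 + c2') * (f t * g t)"
    if t: "0 < t" for t
  proof -
    obtain D1 where D1: "(f has_real_derivative D1) (at t)" "0 < t * D1" "t * D1 \<le> c2 * f t"
      using admissible_profile_deriv[OF f t] by blast
    obtain D2 where D2: "(g has_real_derivative D2) (at t)" "0 < t * D2" "t * D2 \<le> c2' * g t"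
      using admissible_profile_deriv[OF g t] by blast
    have fg: "0 < f t" "0 < g t" using f_pos g_pos t by auto
    have leibniz: "t * (D1 * g t + f t * D2) = (t * D1) * g t + f t * (t * D2)" by (simp add: algebra_simps)
    have "(t * D1) * g t \<le> (c2 * f t) * g t" "f t * (t * D2) \<le> f t * (c2' * g t)"
      using D1 D2 fg by (auto intro: mult_right_mono mult_left_mono)
    then have "t * (D1 * g t + f t * D2) \<le> (c2 + c2') * (f t * g t)"
      unfolding leibniz by (simp add: algebra_simps)
    moreover have "0 < t * (D1 * g t + f t * D2)" unfolding leibniz using D1 D2 fg by (simp add: add_pos_pos)
    moreover have "((\<lambda>t. f t * g t) has_real_derivative D1 * g t + f t * D2) (at t)"
      using DERIV_mult[OF D1(1) D2(1)] by (simp add: ac_simps)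
    ultimately show ?thesis by blast
  qed
  have f_nonneg: "0 \<le> f t / t powr q" and g_nonneg: "0 \<le> g t / t powr q" if "0 < t" for t q
    using f_pos g_pos that by (auto intro: less_imp_le)
  show "almost_increasing (\<lambda>t. f t * g t / t powr (pm + pm')) (\<beta> * \<beta>')"
    using almost_increasing_mult[OF admissible_profile_almost_increasing[OF f]
        admissible_profile_almost_increasing[OF g] \<open>0 \<le> \<beta>\<close> f_nonneg g_nonneg]
    by (rule almost_increasing_cong) (simp_all add: powr_add)
  show "almost_decreasing (\<lambda>t. f t * g t / t powr (pp + pp')) (\<beta> * \<beta>')"
    using almost_decreasing_mult[OF admissible_profile_almost_decreasing[OF f]
        admissible_profile_almost_decreasing[OF g] \<open>0 \<le> \<beta>\<close> f_nonneg g_nonneg]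
    by (rule almost_decreasing_cong) (simp_all add: powr_add)
qed

lemma admissible_profile_compose:
  assumes f: "admissible_profile f cf c2f pmf ppf \<beta>f" and g: "admissible_profile g cg c2g pmg ppg \<beta>g"
    and "0 \<le> pmf" "pmf \<le> ppf" "0 \<le> \<beta>f" "1 \<le> \<beta>g"
  shows "admissible_profile (\<lambda>t. f (g t)) (cf * cg powr c2f) (c2f * c2g) (pmg * pmf) (ppg * ppf) (\<beta>f * \<beta>g powr ppf)"
  unfolding admissible_profile_def
proof (intro conjI allI impI)
  note g_one = admissible_profile_bounds_at_one[OF g]
  note f_pos = admissible_profile_pos[OF f] and g_pos = admissible_profile_pos[OF g]
  note g_mono = admissible_profile_mono[OF g]
  have f_nonneg: "0 \<le> f t" if "0 < t" for t using f_pos that by (simp add: less_imp_le)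
  show "inverse (cf * cg powr c2f) \<le> f (g 1)" "f (g 1) \<le> cf * cg powr c2f"
    using admissible_profile_value_bounds[OF f admissible_profile_const_ge_one[OF g]] g_one by auto
  show "f (g 0) = 0"
    by (simp add: admissible_profile_zero[OF f] admissible_profile_zero[OF g])
  show "0 < f (g t)" if "0 < t" for t using f_pos g_pos that by simp
  show "\<exists>D. ((\<lambda>t. f (g t)) has_real_derivative D) (at t) \<and> 0 < t * D \<and> t * D \<le> c2f * c2g * f (g t)"
    if t: "0 < t" for t
  proof -
    have gt: "0 < g t" using g_pos t by simp
    obtain Dg where Dg: "(g has_real_derivative Dg) (at t)" "0 < t * Dg" "t * Dg \<le> c2g * g t"
      using admissible_profile_deriv[OF g t] by blast
    obtain Df where Df: "(f has_real_derivative Df) (at (g t))" "0 < g t * Df" "g t * Df \<le> c2f * f (g t)"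
      using admissible_profile_deriv[OF f gt] by blast
    have "0 < Df" using Df(2) gt by (simp add: zero_less_mult_iff)
    have "t * (Df * Dg) = Df * (t * Dg)" by simp
    also have "\<dots> \<le> Df * (c2g * g t)" using Dg \<open>0 < Df\<close> by (intro mult_left_mono) auto
    also have "\<dots> = c2g * (g t * Df)" by simp
    also have "\<dots> \<le> c2g * (c2f * f (g t))"
      using Df admissible_profile_exponent_pos[OF g] by (intro mult_left_mono) auto
    finally have "t * (Df * Dg) \<le> c2f * c2g * f (g t)" by (simp add: ac_simps)
    moreover have "0 < t * (Df * Dg)" using \<open>0 < Df\<close> Dg by (simp add: mult.left_commute)
    ultimately show ?thesis using DERIV_chain2[OF Df(1) Dg(1)] by blast
  qed
  have "almost_increasing (\<lambda>t. f (g t) / t powr (pmg * pmf)) (\<beta>f * \<beta>g powr pmf)"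
    using assms f_nonneg g_pos g_mono
    by (intro almost_increasing_compose[OF admissible_profile_almost_increasing[OF f]
        admissible_profile_almost_increasing[OF g]]) auto
  moreover have "\<beta>f * \<beta>g powr pmf \<le> \<beta>f * \<beta>g powr ppf"
    using assms by (intro mult_left_mono powr_mono) auto
  ultimately show "almost_increasing (\<lambda>t. f (g t) / t powr (pmg * pmf)) (\<beta>f * \<beta>g powr ppf)"
    using f_nonneg g_pos by (elim almost_increasing_weaken) auto
  show "almost_decreasing (\<lambda>t. f (g t) / t powr (ppg * ppf)) (\<beta>f * \<beta>g powr ppf)"
    using assms f_nonneg g_pos g_mono
    by (intro almost_decreasing_compose[OF admissible_profile_almost_decreasing[OF f]
        admissible_profile_almost_decreasing[OF g]]) auto
qed

section \<open>Uniform convexity\<close>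

definition uniformly_convex_with :: "(real \<Rightarrow> real) \<Rightarrow> real \<Rightarrow> real \<Rightarrow> bool" where
  "uniformly_convex_with f \<epsilon> \<delta> \<longleftrightarrow> (\<forall>s t. 0 < s \<longrightarrow> 0 < t \<longrightarrow> \<epsilon> * max s t \<le> \<bar>s - t\<bar> \<longrightarrow>
     f ((s + t) / 2) \<le> (1 - \<delta>) * ((f s + f t) / 2))"

lemma uniformly_convex_withD:
  "uniformly_convex_with f \<epsilon> \<delta> \<Longrightarrow> 0 < s \<Longrightarrow> 0 < t \<Longrightarrow> \<epsilon> * max s t \<le> \<bar>s - t\<bar> \<Longrightarrow>
     f ((s + t) / 2) \<le> (1 - \<delta>) * ((f s + f t) / 2)"
  unfolding uniformly_convex_with_def by blast

lemma uniformly_convex_with_mono: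
  assumes "uniformly_convex_with f \<epsilon> \<delta>" "\<delta>' \<le> \<delta>" "\<And>t. 0 < t \<Longrightarrow> 0 \<le> f t"
  shows "uniformly_convex_with f \<epsilon> \<delta>'"
  unfolding uniformly_convex_with_def
proof (intro allI impI)
  fix s t :: real assume st: "0 < s" "0 < t" "\<epsilon> * max s t \<le> \<bar>s - t\<bar>"
  have "f ((s + t) / 2) \<le> (1 - \<delta>) * ((f s + f t) / 2)" using uniformly_convex_withD[OF assms(1) st] .
  also have "\<dots> \<le> (1 - \<delta>') * ((f s + f t) / 2)" using assms st by (intro mult_right_mono) auto
  finally show "f ((s + t) / 2) \<le> (1 - \<delta>') * ((f s + f t) / 2)" .
qed

lemma uniformly_convex_with_add:
  assumes "uniformly_convex_with f \<epsilon> \<delta>" "uniformly_convex_with g \<epsilon> \<delta>'"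
    and "\<And>t. 0 < t \<Longrightarrow> 0 \<le> f t" "\<And>t. 0 < t \<Longrightarrow> 0 \<le> g t"
  shows "uniformly_convex_with (\<lambda>t. f t + g t) \<epsilon> (min \<delta> \<delta>')"
  unfolding uniformly_convex_with_def
proof (intro allI impI)
  fix s t :: real assume st: "0 < s" "0 < t" "\<epsilon> * max s t \<le> \<bar>s - t\<bar>"
  have "f ((s + t) / 2) \<le> (1 - min \<delta> \<delta>') * ((f s + f t) / 2)"
    using uniformly_convex_withD[OF uniformly_convex_with_mono[OF assms(1) _ assms(3)] st] by simp
  moreover have "g ((s + t) / 2) \<le> (1 - min \<delta> \<delta>') * ((g s + g t) / 2)"
    using uniformly_convex_withD[OF uniformly_convex_with_mono[OF assms(2) _ assms(4)] st] by simp
  ultimately show "f ((s + t) / 2) + g ((s + t) / 2) \<le> (1 - min \<delta> \<delta>') * ((f s + g s + (f t + g t)) / 2)"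
    by (simp add: field_simps)
qed

lemma uniformly_convex_with_mult_const:
  assumes "uniformly_convex_with f \<epsilon> \<delta>" "0 \<le> k"
  shows "uniformly_convex_with (\<lambda>t. f t * k) \<epsilon> \<delta>"
  unfolding uniformly_convex_with_def
proof (intro allI impI)
  fix s t :: real assume st: "0 < s" "0 < t" "\<epsilon> * max s t \<le> \<bar>s - t\<bar>"
  have "f ((s + t) / 2) * k \<le> ((1 - \<delta>) * ((f s + f t) / 2)) * k"
    using uniformly_convex_withD[OF assms(1) st] assms(2) by (rule mult_right_mono)
  then show "f ((s + t) / 2) * k \<le> (1 - \<delta>) * ((f s * k + f t * k) / 2)"
    by (simp add: algebra_simps)
qed

lemma mean_mult_mean_le_mean_mult:
  fixes a b c d :: real
  assumes "0 \<le> (a - b) * (c - d)"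
  shows "((a + b) / 2) * ((c + d) / 2) \<le> (a * c + b * d) / 2"
  using assms by (simp add: algebra_simps)

lemma uniformly_convex_with_mult:
  assumes f: "uniformly_convex_with f \<epsilon> \<delta>" and g: "uniformly_convex_with g \<epsilon> 0" and "\<delta> \<le> 1"
    and f_mono: "\<And>s t. 0 < s \<Longrightarrow> s \<le> t \<Longrightarrow> f s \<le> f t" and f_pos: "\<And>t. 0 < t \<Longrightarrow> 0 < f t"
    and g_mono: "\<And>s t. 0 < s \<Longrightarrow> s \<le> t \<Longrightarrow> g s \<le> g t" and g_pos: "\<And>t. 0 < t \<Longrightarrow> 0 < g t"
  shows "uniformly_convex_with (\<lambda>t. f t * g t) \<epsilon> \<delta>"
  unfolding uniformly_convex_with_def
proof (intro allI impI)
  fix s t :: real assume st: "0 < s" "0 < t" "\<epsilon> * max s t \<le> \<bar>s - t\<bar>"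
  have similarly_ordered: "0 \<le> (f s - f t) * (g s - g t)"
  proof (cases "s \<le> t")
    case True
    then have "f s \<le> f t" "g s \<le> g t" using f_mono g_mono st by auto
    then show ?thesis by (simp add: mult_nonpos_nonpos)
  next
    case False
    then have "f t \<le> f s" "g t \<le> g s" using f_mono g_mono st by auto
    then show ?thesis by simp
  qed
  have f_mid: "f ((s + t) / 2) \<le> (1 - \<delta>) * ((f s + f t) / 2)" by (rule uniformly_convex_withD[OF f st])
  have g_mid: "g ((s + t) / 2) \<le> (g s + g t) / 2" using uniformly_convex_withD[OF g st] by simp
  have "0 < f ((s + t) / 2)" "0 < f s" "0 < f t" using f_pos st by auto
  then have "f ((s + t) / 2) * g ((s + t) / 2) \<le> ((1 - \<delta>) * ((f s + f t) / 2)) * ((g s + g t) / 2)"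
    using f_mid g_mid g_pos[of "(s + t) / 2"] st \<open>\<delta> \<le> 1\<close> by (intro mult_mono) auto
  also have "\<dots> = (1 - \<delta>) * (((f s + f t) / 2) * ((g s + g t) / 2))" by (simp only: mult.assoc)
  also have "\<dots> \<le> (1 - \<delta>) * ((f s * g s + f t * g t) / 2)"
    using mean_mult_mean_le_mean_mult[OF similarly_ordered] \<open>\<delta> \<le> 1\<close> by (intro mult_left_mono) auto
  finally show "f ((s + t) / 2) * g ((s + t) / 2) \<le> (1 - \<delta>) * ((f s * g s + f t * g t) / 2)" .
qed

lemma admissible_profile_ratio_bound:
  assumes f: "admissible_profile f c1 c2 pm pp \<beta>" and \<delta>: "0 < \<delta>" "\<delta> < 1"
    and ab: "0 < a" "a \<le> b" "(1 - \<delta>) powr (1 / c2) * b \<le> a"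
  shows "(1 - \<delta>) * f b \<le> f a"
proof -
  have c2: "0 < c2" by (rule admissible_profile_exponent_pos[OF f])
  have fb: "0 < f b" using admissible_profile_pos[OF f] ab by simp
  have "1 - \<delta> = ((1 - \<delta>) powr (1 / c2)) powr c2" using c2 \<delta> by (simp add: powr_powr)
  also have "\<dots> \<le> (a / b) powr c2"
    using ab \<delta> c2 by (intro powr_mono2) (auto simp: field_simps)
  also have "\<dots> = a powr c2 / b powr c2" using ab by (simp add: powr_divide)
  finally have "(1 - \<delta>) * f b \<le> (a powr c2 / b powr c2) * f b"
    using fb by (intro mult_right_mono) auto
  also have "\<dots> = f b * a powr c2 / b powr c2" by simp
  also have "\<dots> \<le> f a" using admissible_profile_growth[OF f ab(1,2)] ab by (simp add: divide_le_eq)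
  finally show ?thesis .
qed

text \<open>If \<open>a\<close> and \<open>b\<close> are far apart, (C2) for \<open>f\<close> at scale \<open>\<eta> = 1 - (1 - \<delta>')\<^sup>1\<^sup>/\<^sup>c\<^sup>2\<close> applies
  directly. Otherwise \<open>a \<ge> (1 - \<eta>) b\<close>, and (C2) at scale \<open>2 (1 - \<kappa>)\<close> applied to \<open>(2 \<kappa> - 1) b\<close> and \<open>b\<close>
  together with the growth bound give \<open>f v \<le> f (\<kappa> b) \<le> (1 - \<delta>') f b \<le> f a\<close>.\<close>
lemma admissible_profile_le_mean_gain:
  assumes f: "admissible_profile f c1 c2 pm pp \<beta>"
    and far: "uniformly_convex_with f (1 - (1 - \<delta>') powr (1 / c2)) \<delta>"
    and near: "uniformly_convex_with f (2 * (1 - \<kappa>)) \<delta>'"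
    and \<kappa>: "3 / 4 \<le> \<kappa>" "\<kappa> < 1" and \<delta>': "0 < \<delta>'" "\<delta>' < 1"
    and ab: "0 < a" "a \<le> b" and v: "0 < v" "v \<le> (a + b) / 2" "v \<le> \<kappa> * b"
  shows "f v \<le> (1 - min \<delta> (\<delta>' / 2)) * ((f a + f b) / 2)"
proof -
  note f_mono = admissible_profile_mono[OF f] and f_pos = admissible_profile_pos[OF f]
  have fa: "0 < f a" and fb: "0 < f b" using f_pos ab by auto
  show ?thesis
  proof (cases "(1 - (1 - \<delta>') powr (1 / c2)) * max a b \<le> \<bar>a - b\<bar>")
    case True
    have "f v \<le> f ((a + b) / 2)" using f_mono v by simp
    also have "\<dots> \<le> (1 - \<delta>) * ((f a + f b) / 2)" using uniformly_convex_withD[OF far ab(1) _ True] ab by simp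
    also have "\<dots> \<le> (1 - min \<delta> (\<delta>' / 2)) * ((f a + f b) / 2)"
      using fa fb by (intro mult_right_mono) auto
    finally show ?thesis .
  next
    case False
    then have close: "(1 - \<delta>') powr (1 / c2) * b \<le> a" using ab by (simp add: max_def algebra_simps)
    have lower: "0 < (2 * \<kappa> - 1) * b" using \<kappa> ab by simp
    have "f v \<le> f (((2 * \<kappa> - 1) * b + b) / 2)" using f_mono v by (simp add: field_simps)
    also have "\<dots> \<le> (1 - \<delta>') * ((f ((2 * \<kappa> - 1) * b) + f b) / 2)"
      using uniformly_convex_withD[OF near lower, of b] \<kappa> ab
      by (simp add: abs_if max_def field_simps mult_le_cancel_right)
    also have "\<dots> \<le> (1 - \<delta>') * f b"
      using f_mono[OF lower, of b] \<kappa> ab \<delta>' by (intro mult_left_mono) (auto simp: mult_le_cancel_right1)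
    finally have v_le_b: "f v \<le> (1 - \<delta>') * f b" .
    also have "\<dots> \<le> f a" by (rule admissible_profile_ratio_bound[OF f \<delta>' ab close])
    finally have "f v \<le> f a" .
    then have "f v \<le> ((1 - \<delta>') * f b + f a) / 2" using v_le_b by simp
    also have "\<dots> \<le> (1 - \<delta>' / 2) * ((f a + f b) / 2)"
      using f_mono[OF ab] \<delta>' by (simp add: field_simps)
    also have "\<dots> \<le> (1 - min \<delta> (\<delta>' / 2)) * ((f a + f b) / 2)"
      using fa fb by (intro mult_right_mono) auto
    finally show ?thesis .
  qed
qed

lemma uniformly_convex_with_compose:
  assumes f: "admissible_profile f c1 c2 pm pp \<beta>"
    and far: "uniformly_convex_with f (1 - (1 - \<delta>') powr (1 / c2)) \<delta>"
    and near: "uniformly_convex_with f (2 * (1 - \<kappa>)) \<delta>'"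
    and \<kappa>: "3 / 4 \<le> \<kappa>" "\<kappa> < 1" "1 - \<delta>g \<le> \<kappa>" and \<delta>': "0 < \<delta>'" "\<delta>' < 1" and "0 \<le> \<delta>g"
    and g: "uniformly_convex_with g \<epsilon> \<delta>g" and g_pos: "\<And>t. 0 < t \<Longrightarrow> 0 < g t"
  shows "uniformly_convex_with (\<lambda>t. f (g t)) \<epsilon> (min \<delta> (\<delta>' / 2))"
  unfolding uniformly_convex_with_def
proof (intro allI impI)
  fix s t :: real assume st: "0 < s" "0 < t" "\<epsilon> * max s t \<le> \<bar>s - t\<bar>"
  define a b v where "a = g s" and "b = g t" and "v = g ((s + t) / 2)"
  have ab: "0 < a" "0 < b" "0 < v" unfolding a_def b_def v_def using g_pos st by auto
  have v_le: "v \<le> (1 - \<delta>g) * ((a + b) / 2)"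
    unfolding a_def b_def v_def by (rule uniformly_convex_withD[OF g st])
  also have "\<dots> \<le> (a + b) / 2" using ab \<open>0 \<le> \<delta>g\<close> by (simp add: mult_le_cancel_right1)
  finally have v_mid: "v \<le> (a + b) / 2" .
  have "(1 - \<delta>g) * ((a + b) / 2) \<le> \<kappa> * max a b"
    using \<kappa> \<open>0 \<le> \<delta>g\<close> ab by (intro mult_mono) auto
  with v_le have v_max: "v \<le> \<kappa> * max a b" by linarith
  note key = admissible_profile_le_mean_gain[OF f far near \<kappa>(1,2) \<delta>']
  have "f v \<le> (1 - min \<delta> (\<delta>' / 2)) * ((f a + f b) / 2)"
  proof (cases "a \<le> b")
    case True
    then show ?thesis using key[OF ab(1) True ab(3) v_mid] v_max by (simp add: max_def)
  next
    case False
    then show ?thesis using key[OF ab(2) _ ab(3), of a] v_mid v_max by (simp add: max_def add.commute)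
  qed
  then show "f (g ((s + t) / 2)) \<le> (1 - min \<delta> (\<delta>' / 2)) * ((f (g s) + f (g t)) / 2)"
    unfolding a_def b_def v_def .
qed

section \<open>Measurability\<close>

lemma borel_measurable_lebesgue_on_spike:
  fixes f g :: "'b::euclidean_space \<Rightarrow> real"
  assumes "S \<in> sets lebesgue" "f \<in> borel_measurable (lebesgue_on S)" "negligible N"
    and "\<And>x. x \<in> S - N \<Longrightarrow> g x = f x"
  shows "g \<in> borel_measurable (lebesgue_on S)"
proof -
  have "f measurable_on S" using assms measurable_on_iff_borel_measurable by blast
  then have "g measurable_on S" using measurable_on_spike assms by blast
  then show ?thesis using assms measurable_on_iff_borel_measurable by blast
qed

lemma AE_lebesgue_on_obtain_negligible:
  assumes "S \<in> sets lebesgue" "AE x in lebesgue_on S. P x"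
  obtains N where "negligible N" "N \<in> sets lebesgue" "\<And>x. x \<in> S - N \<Longrightarrow> P x"
proof -
  have "AE x in lebesgue. x \<in> S \<longrightarrow> P x" using assms AE_restrict_space_iff[of S lebesgue P] by simp
  then obtain N where N: "{x \<in> space lebesgue. \<not> (x \<in> S \<longrightarrow> P x)} \<subseteq> N" "emeasure lebesgue N = 0" "N \<in> sets lebesgue"
    by (rule AE_E)
  then have "negligible N" using negligible_iff_null_sets null_setsI by blast
  then show ?thesis using that N by auto
qed

lemma dyadic_floor_tendsto: "(\<lambda>n. real_of_int \<lfloor>x * 2 ^ n\<rfloor> / 2 ^ n) \<longlonglongrightarrow> (x :: real)"
proof (rule real_tendsto_sandwich[where f = "\<lambda>n. x - (1 / 2) ^ n" and h = "\<lambda>n. x"])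
  show "\<forall>\<^sub>F n in sequentially. x - (1 / 2) ^ n \<le> real_of_int \<lfloor>x * 2 ^ n\<rfloor> / 2 ^ n"
  proof (intro always_eventually allI)
    fix n :: nat
    have "(x * 2 ^ n - 1) / 2 ^ n \<le> real_of_int \<lfloor>x * 2 ^ n\<rfloor> / 2 ^ n"
      by (intro divide_right_mono) (linarith, simp)
    then show "x - (1 / 2) ^ n \<le> real_of_int \<lfloor>x * 2 ^ n\<rfloor> / 2 ^ n" by (simp add: field_simps power_divide)
  qed
  show "\<forall>\<^sub>F n in sequentially. real_of_int \<lfloor>x * 2 ^ n\<rfloor> / 2 ^ n \<le> x"
    by (intro always_eventually allI) (simp add: divide_le_eq)
  show "(\<lambda>n. x - (1 / 2) ^ n) \<longlonglongrightarrow> x"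
    using tendsto_diff[OF tendsto_const LIMSEQ_realpow_zero[of "1 / 2 :: real"]] by simp
qed simp

text \<open>Along the dyadic approximations \<open>\<lfloor>2\<^sup>n h\<rfloor> / 2\<^sup>n\<close>, which take countably many values, \<open>F\<close>
  converges by continuity in \<open>t\<close>.\<close>
lemma borel_measurable_lebesgue_on_compose_continuous:
  fixes F :: "real \<Rightarrow> 'b::euclidean_space \<Rightarrow> real" and h :: "'b \<Rightarrow> real"
  assumes S: "S \<in> sets lebesgue"
    and F: "\<And>t. 0 \<le> t \<Longrightarrow> F t \<in> borel_measurable (lebesgue_on S)"
    and h: "h \<in> borel_measurable (lebesgue_on S)"
    and cont: "AE p in lebesgue_on S. 0 \<le> h p \<and> (0 < h p \<longrightarrow> isCont (\<lambda>t. F t p) (h p))"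
  shows "(\<lambda>p. F (h p) p) \<in> borel_measurable (lebesgue_on S)"
proof -
  obtain N where N: "negligible N" "N \<in> sets lebesgue"
    and good: "\<And>p. p \<in> S - N \<Longrightarrow> 0 \<le> h p \<and> (0 < h p \<longrightarrow> isCont (\<lambda>t. F t p) (h p))"
    using AE_lebesgue_on_obtain_negligible[OF S cont] by blast
  define hn where "hn n p = real_of_int \<lfloor>h p * 2 ^ n\<rfloor> / 2 ^ n" for n :: nat and p
  define vn where "vn n p = (if p \<in> N then 0 else F (max 0 (hn n p)) p)" for n p
  define v where "v p = (if p \<in> N then 0 else F (h p) p)" for p
  have "(\<lambda>p. F (max 0 (hn n p)) p) \<in> borel_measurable (lebesgue_on S)" for n
  proof -
    have "(\<lambda>p. \<lfloor>h p * 2 ^ n\<rfloor>) \<in> measurable (lebesgue_on S) (count_space UNIV)"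
      by (rule measurable_compose[OF _ measurable_real_floor]) (use h in measurable)
    then have "(\<lambda>p. (\<lambda>k::int. F (max 0 (real_of_int k / 2 ^ n))) \<lfloor>h p * 2 ^ n\<rfloor> p) \<in> borel_measurable (lebesgue_on S)"
      by (rule measurable_compose_countable[rotated]) (rule F, simp)
    then show ?thesis unfolding hn_def by simp
  qed
  moreover have "N \<inter> space (lebesgue_on S) \<in> sets (lebesgue_on S)"
    using N S by (simp add: sets_restrict_space_iff)
  ultimately have vn: "vn n \<in> borel_measurable (lebesgue_on S)" for n
    unfolding vn_def by (intro measurable_If_set) auto
  have "v \<in> borel_measurable (lebesgue_on S)"
  proof (rule borel_measurable_LIMSEQ_real[OF _ vn])
    fix p assume "p \<in> space (lebesgue_on S)"
    then have "p \<in> S" by simp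
    show "(\<lambda>n. vn n p) \<longlonglongrightarrow> v p"
    proof (cases "p \<notin> N \<and> 0 < h p")
      case True
      then have "isCont (\<lambda>t. F t p) (h p)" using good \<open>p \<in> S\<close> by blast
      moreover have "(\<lambda>n. hn n p) \<longlonglongrightarrow> h p" unfolding hn_def by (rule dyadic_floor_tendsto)
      ultimately have "(\<lambda>n. F (hn n p) p) \<longlonglongrightarrow> F (h p) p" by (rule isCont_tendsto_compose)
      moreover have "0 \<le> hn n p" for n unfolding hn_def using True by simp
      ultimately show ?thesis using True by (simp add: vn_def v_def max_def)
    next
      case False
      then have "p \<in> N \<or> h p = 0" using good \<open>p \<in> S\<close> by force
      then have "vn n p = v p" for n by (auto simp: vn_def v_def hn_def)
      then show ?thesis by simp
    qed
  qed
  then show ?thesis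
    by (rule borel_measurable_lebesgue_on_spike[OF S _ N(1)]) (simp add: v_def)
qed

lemma L1_loc_bounded_borel:
  assumes u: "u \<in> borel_measurable borel" and bound: "\<And>x. norm (u x) \<le> B"
  shows "L1_loc \<Omega> u"
proof -
  have "u \<in> borel_measurable lebesgue" using u by (simp add: measurable_completion)
  then have u_lebesgue: "u \<in> borel_measurable (lebesgue_on K)" for K by (rule measurable_restrict_space1)
  moreover have "integrable (lebesgue_on K) u" if "compact K" for K
  proof -
    interpret finite_measure "lebesgue_on K"
      by (rule finite_measure_lebesgue_on[OF lmeasurable_compact[OF that]])
    show ?thesis
    proof (rule integrable_const_bound[where B = B])
      show "AE x in lebesgue_on K. norm (u x) \<le> B" using bound by simp
    qed (rule u_lebesgue)
  qed
  ultimately show ?thesis unfolding L1_loc_def by blast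
qed

lemma rat_separates_reals:
  fixes x y :: real
  assumes "x \<noteq> y"
  obtains r where "(x < real_of_rat r) \<noteq> (y < real_of_rat r)"
proof -
  have "min x y < max x y" using assms by linarith
  then obtain s where "s \<in> \<rat>" "min x y < s" "s < max x y" using Rats_dense_in_real by blast
  moreover from \<open>s \<in> \<rat>\<close> obtain r where "s = real_of_rat r" by (rule Rats_cases)
  ultimately show ?thesis by (intro that[of r]) (auto simp: min_def max_def split: if_splits)
qed

section \<open>The conditions (C1)--(C5)\<close>

abbreviation profile :: "(real \<Rightarrow> 'a \<Rightarrow> 'a \<Rightarrow> real) \<Rightarrow> 'a \<times> 'a \<Rightarrow> real \<Rightarrow> real" where
  "profile \<theta> p \<equiv> \<lambda>t. \<theta> t (fst p) (snd p)"

lemma C1_iff: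
  "C1 \<Omega> \<theta> \<longleftrightarrow> (\<forall>u. L1_loc \<Omega> u \<longrightarrow>
     (\<lambda>p. \<theta> (cmod (u (fst p) - u (snd p))) (fst p) (snd p)) \<in> borel_measurable (lebesgue_on (\<Omega> \<times> \<Omega>)))"
  by (simp add: C1_def split_beta')

text \<open>Test (C1) with \<open>u = t \<cdot> 1{x \<bullet> e < q}\<close> for rational \<open>q\<close>: then \<open>\<bar>u x - u y\<bar> = t\<close> whenever \<open>q\<close>
  separates \<open>x \<bullet> e\<close> from \<open>y \<bullet> e\<close>, and off the null hyperplane \<open>x \<bullet> e = y \<bullet> e\<close> some \<open>q\<close> does.\<close>
lemma C1_imp_borel_measurable_profile_value:
  fixes \<Omega> :: "'a::euclidean_space set" and \<phi> :: "real \<Rightarrow> 'a \<Rightarrow> 'a \<Rightarrow> real"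
  assumes C1: "C1 \<Omega> \<phi>" and "0 \<le> t" and \<Omega>: "\<Omega> \<times> \<Omega> \<in> sets lebesgue"
  shows "(\<lambda>p. \<phi> t (fst p) (snd p)) \<in> borel_measurable (lebesgue_on (\<Omega> \<times> \<Omega>))"
proof -
  obtain e :: 'a where e: "e \<in> Basis" using nonempty_Basis by blast
  define q where "q n = real_of_rat (from_nat n)" for n :: nat
  define u where "u n x = complex_of_real (t * indicator {x. x \<bullet> e < q n} x)" for n x
  define separates where "separates n p \<longleftrightarrow> (fst p \<bullet> e < q n) \<noteq> (snd p \<bullet> e < q n)" for n and p :: "'a \<times> 'a"
  define g where "g n p = \<phi> (cmod (u n (fst p) - u n (snd p))) (fst p) (snd p)" for n p
  define Q where "Q p = (LEAST n. separates n p)" for p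
  have [measurable]: "(\<lambda>x::'a. x \<bullet> e) \<in> borel_measurable borel"
    "(\<lambda>p::'a \<times> 'a. fst p \<bullet> e) \<in> borel_measurable borel" "(\<lambda>p::'a \<times> 'a. snd p \<bullet> e) \<in> borel_measurable borel"
    by (intro borel_measurable_continuous_onI continuous_intros)+
  have [measurable]: "{x::'a. x \<bullet> e < c} \<in> sets borel" for c
    by (intro borel_open open_Collect_less continuous_intros)
  have "L1_loc \<Omega> (u n)" for n
  proof (rule L1_loc_bounded_borel[where B = "\<bar>t\<bar>"])
    show "u n \<in> borel_measurable borel" unfolding u_def by measurable
  qed (auto simp: u_def indicator_def)
  then have "g n \<in> borel_measurable (lebesgue_on (\<Omega> \<times> \<Omega>))" for n
    using C1 unfolding C1_iff g_def by blast
  moreover have "(\<lambda>p. separates n p) \<in> measurable lebesgue (count_space UNIV)" for n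
    unfolding separates_def by (rule measurable_completion) measurable
  then have "Q \<in> measurable (lebesgue_on (\<Omega> \<times> \<Omega>)) (count_space UNIV)"
    unfolding Q_def by (intro measurable_Least measurable_restrict_space1)
  ultimately have "(\<lambda>p. g (Q p) p) \<in> borel_measurable (lebesgue_on (\<Omega> \<times> \<Omega>))"
    by (rule measurable_compose_countable)
  moreover have "negligible {p::'a \<times> 'a. (e, - e) \<bullet> p = 0}"
    using e by (intro negligible_hyperplane) (auto simp: zero_prod_def)
  ultimately show ?thesis
  proof (rule borel_measurable_lebesgue_on_spike[OF \<Omega>])
    fix p assume p: "p \<in> \<Omega> \<times> \<Omega> - {p. (e, - e) \<bullet> p = 0}"
    have "fst p \<bullet> e \<noteq> snd p \<bullet> e" using p by (cases p) (auto simp: inner_commute)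
    then obtain r where "(fst p \<bullet> e < real_of_rat r) \<noteq> (snd p \<bullet> e < real_of_rat r)"
      using rat_separates_reals by blast
    then have "separates (to_nat r) p" unfolding separates_def q_def by simp
    then have "\<exists>n. separates n p" by blast
    then have "separates (Q p) p" unfolding Q_def by (rule LeastI_ex)
    then have "cmod (u (Q p) (fst p) - u (Q p) (snd p)) = t"
      using \<open>0 \<le> t\<close> unfolding separates_def u_def by (auto simp: indicator_def)
    then show "\<phi> t (fst p) (snd p) = g (Q p) p" unfolding g_def by simp
  qed
qed

lemma C2_iff:
  "C2 \<Omega> \<theta> \<longleftrightarrow> (\<forall>\<epsilon>>0. \<exists>\<delta>. 0 < \<delta> \<and> \<delta> < 1 \<and>
     (AE p in lebesgue_on (\<Omega> \<times> \<Omega>). uniformly_convex_with (profile \<theta> p) \<epsilon> \<delta>))"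
  by (simp add: C2_def uniformly_convex_with_def)

lemma conditions_C_iff:
  "conditions_C \<Omega> \<theta> \<longleftrightarrow> nonneg_on \<Omega> \<theta> \<and> C1 \<Omega> \<theta> \<and> C2 \<Omega> \<theta> \<and>
     (\<exists>c1 c2 pm pp \<beta>. 0 < c1 \<and> 1 < c2 \<and> 1 < pm \<and> pm \<le> pp \<and> 1 \<le> \<beta> \<and>
        (AE p in lebesgue_on (\<Omega> \<times> \<Omega>). admissible_profile (profile \<theta> p) c1 c2 pm pp \<beta>))"
  (is "_ \<longleftrightarrow> _ \<and> _ \<and> _ \<and> ?profiles")
proof -
  have "C3 \<Omega> \<theta> \<and> C4 \<Omega> \<theta> \<and> C5 \<Omega> \<theta> \<longleftrightarrow> ?profiles"
  proof
    assume "C3 \<Omega> \<theta> \<and> C4 \<Omega> \<theta> \<and> C5 \<Omega> \<theta>"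
    then obtain pm pp \<beta> c1 c2 where constants: "0 < c1" "1 < c2" "1 < pm" "pm \<le> pp" "1 \<le> \<beta>"
      and C3: "AE p in lebesgue_on (\<Omega> \<times> \<Omega>).
          almost_increasing (\<lambda>t. \<theta> t (fst p) (snd p) / t powr pm) \<beta> \<and>
          almost_decreasing (\<lambda>t. \<theta> t (fst p) (snd p) / t powr pp) \<beta>"
      and C4: "AE p in lebesgue_on (\<Omega> \<times> \<Omega>). inverse c1 \<le> \<theta> 1 (fst p) (snd p) \<and> \<theta> 1 (fst p) (snd p) \<le> c1 \<and>
          \<theta> 0 (fst p) (snd p) = 0 \<and> (\<forall>t>0. 0 < \<theta> t (fst p) (snd p))"
      and C5: "AE p in lebesgue_on (\<Omega> \<times> \<Omega>). \<forall>t>0. \<exists>D. (profile \<theta> p has_real_derivative D) (at t) \<and>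
          0 < t * D \<and> t * D \<le> c2 * \<theta> t (fst p) (snd p)"
      unfolding C3_def C4_def C5_def by blast
    have "AE p in lebesgue_on (\<Omega> \<times> \<Omega>). admissible_profile (profile \<theta> p) c1 c2 pm pp \<beta>"
      using C3 C4 C5 by eventually_elim (simp add: admissible_profile_def)
    with constants show ?profiles by blast
  next
    assume ?profiles
    then obtain c1 c2 pm pp \<beta> where constants: "0 < c1" "1 < c2" "1 < pm" "pm \<le> pp" "1 \<le> \<beta>"
      and profiles: "AE p in lebesgue_on (\<Omega> \<times> \<Omega>). admissible_profile (profile \<theta> p) c1 c2 pm pp \<beta>"
      by blast
    have "AE p in lebesgue_on (\<Omega> \<times> \<Omega>).
          almost_increasing (\<lambda>t. \<theta> t (fst p) (snd p) / t powr pm) \<beta> \<and>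
          almost_decreasing (\<lambda>t. \<theta> t (fst p) (snd p) / t powr pp) \<beta>"
      using profiles by eventually_elim (simp add: admissible_profile_def)
    moreover have "AE p in lebesgue_on (\<Omega> \<times> \<Omega>). inverse c1 \<le> \<theta> 1 (fst p) (snd p) \<and>
          \<theta> 1 (fst p) (snd p) \<le> c1 \<and> \<theta> 0 (fst p) (snd p) = 0 \<and> (\<forall>t>0. 0 < \<theta> t (fst p) (snd p))"
      using profiles by eventually_elim (simp add: admissible_profile_def)
    moreover have "AE p in lebesgue_on (\<Omega> \<times> \<Omega>). \<forall>t>0. \<exists>D. (profile \<theta> p has_real_derivative D) (at t) \<and>
          0 < t * D \<and> t * D \<le> c2 * \<theta> t (fst p) (snd p)"
      using profiles by eventually_elim (simp add: admissible_profile_def)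
    ultimately show "C3 \<Omega> \<theta> \<and> C4 \<Omega> \<theta> \<and> C5 \<Omega> \<theta>"
      unfolding C3_def C4_def C5_def using constants by blast
  qed
  then show ?thesis unfolding conditions_C_def by blast
qed

lemma conditions_CI:
  assumes "nonneg_on \<Omega> \<theta>" "C1 \<Omega> \<theta>" "C2 \<Omega> \<theta>" "0 < c1" "1 < c2" "1 < pm" "pm \<le> pp" "1 \<le> \<beta>"
    and "AE p in lebesgue_on (\<Omega> \<times> \<Omega>). admissible_profile (profile \<theta> p) c1 c2 pm pp \<beta>"
  shows "conditions_C \<Omega> \<theta>"
  using assms unfolding conditions_C_iff by blast

lemma conditions_CE:
  assumes "conditions_C \<Omega> \<theta>"
  obtains c1 c2 pm pp \<beta> where "nonneg_on \<Omega> \<theta>" "C1 \<Omega> \<theta>" "C2 \<Omega> \<theta>"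
    "0 < c1" "1 < c2" "1 < pm" "pm \<le> pp" "1 \<le> \<beta>"
    "AE p in lebesgue_on (\<Omega> \<times> \<Omega>). admissible_profile (profile \<theta> p) c1 c2 pm pp \<beta>"
  using assms unfolding conditions_C_iff by blast

lemma C1_add:
  assumes "C1 \<Omega> \<phi>" "C1 \<Omega> \<psi>"
  shows "C1 \<Omega> (\<lambda>z x y. \<phi> z x y + \<psi> z x y)"
  using assms unfolding C1_iff by (auto intro!: borel_measurable_add)

lemma C1_mult:
  assumes "C1 \<Omega> \<phi>" "C1 \<Omega> \<psi>"
  shows "C1 \<Omega> (\<lambda>z x y. \<phi> z x y * \<psi> z x y)"
  using assms unfolding C1_iff by (auto intro!: borel_measurable_times)

lemma C1_mult_weight:
  assumes "C1 \<Omega> \<phi>" "(\<lambda>(x, y). b x y) \<in> borel_measurable (lebesgue_on (\<Omega> \<times> \<Omega>))"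
  shows "C1 \<Omega> (\<lambda>z x y. \<phi> z x y * b x y)"
proof -
  have "(\<lambda>p. b (fst p) (snd p)) \<in> borel_measurable (lebesgue_on (\<Omega> \<times> \<Omega>))"
    using assms(2) by (simp add: split_beta')
  with assms(1) show ?thesis unfolding C1_iff by (auto intro!: borel_measurable_times)
qed

lemma C1_compose:
  fixes \<Omega> :: "'a::euclidean_space set"
  assumes \<Omega>: "\<Omega> \<times> \<Omega> \<in> sets lebesgue" and \<phi>: "C1 \<Omega> \<phi>" and \<psi>: "C1 \<Omega> \<psi>" "nonneg_on \<Omega> \<psi>"
    and cont: "AE p in lebesgue_on (\<Omega> \<times> \<Omega>). \<forall>t>0. isCont (profile \<phi> p) t"
  shows "C1 \<Omega> (\<lambda>z x y. \<phi> (\<psi> z x y) x y)"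
  unfolding C1_iff
proof (intro allI impI)
  fix u assume u: "L1_loc \<Omega> u"
  define h where "h p = \<psi> (cmod (u (fst p) - u (snd p))) (fst p) (snd p)" for p
  have "(\<lambda>p. \<phi> (h p) (fst p) (snd p)) \<in> borel_measurable (lebesgue_on (\<Omega> \<times> \<Omega>))"
  proof (rule borel_measurable_lebesgue_on_compose_continuous[OF \<Omega>, where F = "\<lambda>t p. \<phi> t (fst p) (snd p)"])
    show "(\<lambda>p. \<phi> t (fst p) (snd p)) \<in> borel_measurable (lebesgue_on (\<Omega> \<times> \<Omega>))" if "0 \<le> t" for t
      by (rule C1_imp_borel_measurable_profile_value[OF \<phi> that \<Omega>])
    show "h \<in> borel_measurable (lebesgue_on (\<Omega> \<times> \<Omega>))"
      using \<psi>(1) u unfolding C1_iff h_def by blast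
    have "AE p in lebesgue_on (\<Omega> \<times> \<Omega>). p \<in> \<Omega> \<times> \<Omega>" by (rule AE_I2) simp
    then show "AE p in lebesgue_on (\<Omega> \<times> \<Omega>). 0 \<le> h p \<and> (0 < h p \<longrightarrow> isCont (\<lambda>t. \<phi> t (fst p) (snd p)) (h p))"
      using cont by eventually_elim (use \<psi>(2) in \<open>auto simp: nonneg_on_def h_def\<close>)
  qed
  then show "(\<lambda>p. \<phi> (\<psi> (cmod (u (fst p) - u (snd p))) (fst p) (snd p)) (fst p) (snd p))
      \<in> borel_measurable (lebesgue_on (\<Omega> \<times> \<Omega>))"
    unfolding h_def by simp
qed

lemma C2_add:
  assumes "C2 \<Omega> \<phi>" "C2 \<Omega> \<psi>" "nonneg_on \<Omega> \<phi>" "nonneg_on \<Omega> \<psi>"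
  shows "C2 \<Omega> (\<lambda>z x y. \<phi> z x y + \<psi> z x y)"
  unfolding C2_iff
proof (intro allI impI)
  fix \<epsilon> :: real assume "0 < \<epsilon>"
  then obtain \<delta> \<delta>' where \<delta>: "0 < \<delta>" "\<delta> < 1" "0 < \<delta>'" "\<delta>' < 1"
    and \<phi>: "AE p in lebesgue_on (\<Omega> \<times> \<Omega>). uniformly_convex_with (profile \<phi> p) \<epsilon> \<delta>"
    and \<psi>: "AE p in lebesgue_on (\<Omega> \<times> \<Omega>). uniformly_convex_with (profile \<psi> p) \<epsilon> \<delta>'"
    using assms(1,2) unfolding C2_iff by meson
  have "AE p in lebesgue_on (\<Omega> \<times> \<Omega>). p \<in> \<Omega> \<times> \<Omega>" by (rule AE_I2) simp
  with \<phi> \<psi> have "AE p in lebesgue_on (\<Omega> \<times> \<Omega>).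
      uniformly_convex_with (profile (\<lambda>z x y. \<phi> z x y + \<psi> z x y) p) \<epsilon> (min \<delta> \<delta>')"
  proof eventually_elim
    case (elim p)
    then show ?case
      using assms(3,4) by (intro uniformly_convex_with_add) (auto simp: nonneg_on_def mem_Times_iff)
  qed
  with \<delta> show "\<exists>\<delta>. 0 < \<delta> \<and> \<delta> < 1 \<and> (AE p in lebesgue_on (\<Omega> \<times> \<Omega>).
      uniformly_convex_with (profile (\<lambda>z x y. \<phi> z x y + \<psi> z x y) p) \<epsilon> \<delta>)"
    by (intro exI[of _ "min \<delta> \<delta>'"]) auto
qed

lemma C2_mult_weight:
  assumes "C2 \<Omega> \<phi>" "\<forall>x\<in>\<Omega>. \<forall>y\<in>\<Omega>. 0 \<le> b x y"
  shows "C2 \<Omega> (\<lambda>z x y. \<phi> z x y * b x y)"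
  unfolding C2_iff
proof (intro allI impI)
  fix \<epsilon> :: real assume "0 < \<epsilon>"
  then obtain \<delta> where \<delta>: "0 < \<delta>" "\<delta> < 1"
    and \<phi>: "AE p in lebesgue_on (\<Omega> \<times> \<Omega>). uniformly_convex_with (profile \<phi> p) \<epsilon> \<delta>"
    using assms(1) unfolding C2_iff by meson
  have "AE p in lebesgue_on (\<Omega> \<times> \<Omega>). p \<in> \<Omega> \<times> \<Omega>" by (rule AE_I2) simp
  with \<phi> have "AE p in lebesgue_on (\<Omega> \<times> \<Omega>).
      uniformly_convex_with (profile (\<lambda>z x y. \<phi> z x y * b x y) p) \<epsilon> \<delta>"
  proof eventually_elim
    case (elim p)
    then show ?case using assms(2) by (intro uniformly_convex_with_mult_const) (auto simp: mem_Times_iff)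
  qed
  with \<delta> show "\<exists>\<delta>. 0 < \<delta> \<and> \<delta> < 1 \<and> (AE p in lebesgue_on (\<Omega> \<times> \<Omega>).
      uniformly_convex_with (profile (\<lambda>z x y. \<phi> z x y * b x y) p) \<epsilon> \<delta>)"
    by blast
qed

lemma C2_mult:
  assumes "C2 \<Omega> \<phi>" "C2 \<Omega> \<psi>"
    and \<phi>: "AE p in lebesgue_on (\<Omega> \<times> \<Omega>). admissible_profile (profile \<phi> p) c1 c2 pm pp \<beta>"
    and \<psi>: "AE p in lebesgue_on (\<Omega> \<times> \<Omega>). admissible_profile (profile \<psi> p) c1' c2' pm' pp' \<beta>'"
  shows "C2 \<Omega> (\<lambda>z x y. \<phi> z x y * \<psi> z x y)"
  unfolding C2_iff
proof (intro allI impI)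
  fix \<epsilon> :: real assume "0 < \<epsilon>"
  then obtain \<delta> \<delta>' where \<delta>: "0 < \<delta>" "\<delta> < 1" "0 < \<delta>'"
    and \<phi>_conv: "AE p in lebesgue_on (\<Omega> \<times> \<Omega>). uniformly_convex_with (profile \<phi> p) \<epsilon> \<delta>"
    and \<psi>_conv: "AE p in lebesgue_on (\<Omega> \<times> \<Omega>). uniformly_convex_with (profile \<psi> p) \<epsilon> \<delta>'"
    using assms(1,2) unfolding C2_iff by meson
  from \<phi>_conv \<psi>_conv \<phi> \<psi> have "AE p in lebesgue_on (\<Omega> \<times> \<Omega>).
      uniformly_convex_with (profile (\<lambda>z x y. \<phi> z x y * \<psi> z x y) p) \<epsilon> \<delta>"
  proof eventually_elim
    case (elim p)
    have "uniformly_convex_with (profile \<psi> p) \<epsilon> 0"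
      using \<delta> admissible_profile_pos[OF elim(4)]
      by (intro uniformly_convex_with_mono[OF elim(2)]) (auto simp: less_imp_le)
    with elim(1) show ?case using \<delta>
      by (intro uniformly_convex_with_mult[OF _ _ _ admissible_profile_mono[OF elim(3)]
          admissible_profile_pos[OF elim(3)] admissible_profile_mono[OF elim(4)]
          admissible_profile_pos[OF elim(4)]]) auto
  qed
  with \<delta> show "\<exists>\<delta>. 0 < \<delta> \<and> \<delta> < 1 \<and> (AE p in lebesgue_on (\<Omega> \<times> \<Omega>).
      uniformly_convex_with (profile (\<lambda>z x y. \<phi> z x y * \<psi> z x y) p) \<epsilon> \<delta>)"
    by blast
qed

lemma C2_compose:
  assumes "C2 \<Omega> \<phi>" "C2 \<Omega> \<psi>" "0 < c2"
    and \<phi>: "AE p in lebesgue_on (\<Omega> \<times> \<Omega>). admissible_profile (profile \<phi> p) c1 c2 pm pp \<beta>"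
    and \<psi>: "AE p in lebesgue_on (\<Omega> \<times> \<Omega>). admissible_profile (profile \<psi> p) c1' c2' pm' pp' \<beta>'"
  shows "C2 \<Omega> (\<lambda>z x y. \<phi> (\<psi> z x y) x y)"
  unfolding C2_iff
proof (intro allI impI)
  fix \<epsilon> :: real assume "0 < \<epsilon>"
  then obtain \<delta>g where \<delta>g: "0 < \<delta>g" "\<delta>g < 1"
    and \<psi>_conv: "AE p in lebesgue_on (\<Omega> \<times> \<Omega>). uniformly_convex_with (profile \<psi> p) \<epsilon> \<delta>g"
    using assms(2) unfolding C2_iff by meson
  define \<kappa> where "\<kappa> = max (1 - \<delta>g) (3 / 4)"
  have \<kappa>: "3 / 4 \<le> \<kappa>" "\<kappa> < 1" "1 - \<delta>g \<le> \<kappa>" using \<delta>g unfolding \<kappa>_def by auto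
  then have "0 < 2 * (1 - \<kappa>)" by simp
  then obtain \<delta>' where \<delta>': "0 < \<delta>'" "\<delta>' < 1"
    and near: "AE p in lebesgue_on (\<Omega> \<times> \<Omega>). uniformly_convex_with (profile \<phi> p) (2 * (1 - \<kappa>)) \<delta>'"
    using assms(1) unfolding C2_iff by meson
  have "(1 - \<delta>') powr (1 / c2) < 1 powr (1 / c2)" using \<delta>' \<open>0 < c2\<close> by (intro powr_less_mono2) auto
  then have "0 < 1 - (1 - \<delta>') powr (1 / c2)" by simp
  then obtain \<delta> where \<delta>: "0 < \<delta>" "\<delta> < 1"
    and far: "AE p in lebesgue_on (\<Omega> \<times> \<Omega>). uniformly_convex_with (profile \<phi> p) (1 - (1 - \<delta>') powr (1 / c2)) \<delta>"
    using assms(1) unfolding C2_iff by meson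
  from \<psi>_conv near far \<phi> \<psi> have "AE p in lebesgue_on (\<Omega> \<times> \<Omega>).
      uniformly_convex_with (profile (\<lambda>z x y. \<phi> (\<psi> z x y) x y) p) \<epsilon> (min \<delta> (\<delta>' / 2))"
  proof eventually_elim
    case (elim p)
    show ?case
      using uniformly_convex_with_compose[OF elim(4) elim(3) elim(2) \<kappa> \<delta>' _ elim(1)] \<delta>g
        admissible_profile_pos[OF elim(5)] by simp
  qed
  moreover have "0 < min \<delta> (\<delta>' / 2)" "min \<delta> (\<delta>' / 2) < 1" using \<delta> \<delta>' by auto
  ultimately show "\<exists>\<delta>. 0 < \<delta> \<and> \<delta> < 1 \<and> (AE p in lebesgue_on (\<Omega> \<times> \<Omega>).
      uniformly_convex_with (profile (\<lambda>z x y. \<phi> (\<psi> z x y) x y) p) \<epsilon> \<delta>)"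
    by blast
qed

lemma conditions_C_add:
  assumes "conditions_C \<Omega> \<phi>" "conditions_C \<Omega> \<psi>"
  shows "conditions_C \<Omega> (\<lambda>z x y. \<phi> z x y + \<psi> z x y)"
proof -
  obtain c1 c2 pm pp \<beta> where \<phi>: "nonneg_on \<Omega> \<phi>" "C1 \<Omega> \<phi>" "C2 \<Omega> \<phi>"
    and k: "0 < c1" "1 < c2" "1 < pm" "pm \<le> pp" "1 \<le> \<beta>"
    and \<phi>_profile: "AE p in lebesgue_on (\<Omega> \<times> \<Omega>). admissible_profile (profile \<phi> p) c1 c2 pm pp \<beta>"
    using assms(1) by (rule conditions_CE)
  obtain c1' c2' pm' pp' \<beta>' where \<psi>: "nonneg_on \<Omega> \<psi>" "C1 \<Omega> \<psi>" "C2 \<Omega> \<psi>"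
    and k': "0 < c1'" "1 < c2'" "1 < pm'" "pm' \<le> pp'" "1 \<le> \<beta>'"
    and \<psi>_profile: "AE p in lebesgue_on (\<Omega> \<times> \<Omega>). admissible_profile (profile \<psi> p) c1' c2' pm' pp' \<beta>'"
    using assms(2) by (rule conditions_CE)
  have nonneg: "nonneg_on \<Omega> (\<lambda>z x y. \<phi> z x y + \<psi> z x y)"
    using \<phi>(1) \<psi>(1) unfolding nonneg_on_def by (simp add: add_nonneg_nonneg)
  from \<phi>_profile \<psi>_profile have "AE p in lebesgue_on (\<Omega> \<times> \<Omega>). admissible_profile
      (profile (\<lambda>z x y. \<phi> z x y + \<psi> z x y) p) (c1 + c1') (max c2 c2') (min pm pm') (max pp pp') (max \<beta> \<beta>')"
  proof eventually_elim
    case (elim p)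
    show ?case using admissible_profile_add[OF elim] k k' by simp
  qed
  from conditions_CI[OF nonneg C1_add[OF \<phi>(2) \<psi>(2)] C2_add[OF \<phi>(3) \<psi>(3) \<phi>(1) \<psi>(1)] _ _ _ _ _ this]
  show ?thesis using k k' by simp
qed

lemma conditions_C_mult_weight:
  assumes "conditions_C \<Omega> \<phi>"
    and b: "(\<lambda>(x, y). b x y) \<in> borel_measurable (lebesgue_on (\<Omega> \<times> \<Omega>))"
    and b_bounds: "0 < c5" "\<forall>x\<in>\<Omega>. \<forall>y\<in>\<Omega>. c5 < b x y \<and> b x y < c6"
  shows "conditions_C \<Omega> (\<lambda>z x y. \<phi> z x y * b x y)"
proof -
  obtain c1 c2 pm pp \<beta> where \<phi>: "nonneg_on \<Omega> \<phi>" "C1 \<Omega> \<phi>" "C2 \<Omega> \<phi>"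
    and k: "0 < c1" "1 < c2" "1 < pm" "pm \<le> pp" "1 \<le> \<beta>"
    and \<phi>_profile: "AE p in lebesgue_on (\<Omega> \<times> \<Omega>). admissible_profile (profile \<phi> p) c1 c2 pm pp \<beta>"
    using assms(1) by (rule conditions_CE)
  define K where "K = max c6 (inverse c5)"
  have "inverse K \<le> inverse (inverse c5)"
    using b_bounds unfolding K_def by (intro le_imp_inverse_le) auto
  then have K: "0 < K" "inverse K \<le> c5" using b_bounds unfolding K_def by (auto simp: less_max_iff_disj)
  have b_pos: "\<forall>x\<in>\<Omega>. \<forall>y\<in>\<Omega>. 0 \<le> b x y" using b_bounds by (meson less_imp_le less_trans)
  have nonneg: "nonneg_on \<Omega> (\<lambda>z x y. \<phi> z x y * b x y)"
    using \<phi>(1) b_pos unfolding nonneg_on_def by simp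
  have "AE p in lebesgue_on (\<Omega> \<times> \<Omega>). p \<in> \<Omega> \<times> \<Omega>" by (rule AE_I2) simp
  with \<phi>_profile have "AE p in lebesgue_on (\<Omega> \<times> \<Omega>).
      admissible_profile (profile (\<lambda>z x y. \<phi> z x y * b x y) p) (c1 * K) c2 pm pp \<beta>"
  proof eventually_elim
    case (elim p)
    then have "c5 < b (fst p) (snd p)" "b (fst p) (snd p) < c6" using b_bounds by (auto simp: mem_Times_iff)
    then show ?case using K b_bounds unfolding K_def
      by (intro admissible_profile_mult_const[OF elim(1)]) auto
  qed
  from conditions_CI[OF nonneg C1_mult_weight[OF \<phi>(2) b] C2_mult_weight[OF \<phi>(3) b_pos] _ _ _ _ _ this]
  show ?thesis using k K by simp
qed

lemma conditions_C_mult: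
  assumes "conditions_C \<Omega> \<phi>" "conditions_C \<Omega> \<psi>"
  shows "conditions_C \<Omega> (\<lambda>z x y. \<phi> z x y * \<psi> z x y)"
proof -
  obtain c1 c2 pm pp \<beta> where \<phi>: "nonneg_on \<Omega> \<phi>" "C1 \<Omega> \<phi>" "C2 \<Omega> \<phi>"
    and k: "0 < c1" "1 < c2" "1 < pm" "pm \<le> pp" "1 \<le> \<beta>"
    and \<phi>_profile: "AE p in lebesgue_on (\<Omega> \<times> \<Omega>). admissible_profile (profile \<phi> p) c1 c2 pm pp \<beta>"
    using assms(1) by (rule conditions_CE)
  obtain c1' c2' pm' pp' \<beta>' where \<psi>: "nonneg_on \<Omega> \<psi>" "C1 \<Omega> \<psi>" "C2 \<Omega> \<psi>"
    and k': "0 < c1'" "1 < c2'" "1 < pm'" "pm' \<le> pp'" "1 \<le> \<beta>'"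
    and \<psi>_profile: "AE p in lebesgue_on (\<Omega> \<times> \<Omega>). admissible_profile (profile \<psi> p) c1' c2' pm' pp' \<beta>'"
    using assms(2) by (rule conditions_CE)
  have nonneg: "nonneg_on \<Omega> (\<lambda>z x y. \<phi> z x y * \<psi> z x y)"
    using \<phi>(1) \<psi>(1) unfolding nonneg_on_def by simp
  from \<phi>_profile \<psi>_profile have profile: "AE p in lebesgue_on (\<Omega> \<times> \<Omega>). admissible_profile
      (profile (\<lambda>z x y. \<phi> z x y * \<psi> z x y) p) (c1 * c1') (c2 + c2') (pm + pm') (pp + pp') (\<beta> * \<beta>')"
  proof eventually_elim
    case (elim p)
    show ?case using admissible_profile_mult[OF elim] k by simp
  qed
  have "1 * 1 \<le> \<beta> * \<beta>'" using k k' by (intro mult_mono) auto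
  from conditions_CI[OF nonneg C1_mult[OF \<phi>(2) \<psi>(2)] C2_mult[OF \<phi>(3) \<psi>(3) \<phi>_profile \<psi>_profile]
      _ _ _ _ _ profile]
  show ?thesis using k k' \<open>1 * 1 \<le> \<beta> * \<beta>'\<close> by simp
qed

lemma conditions_C_compose:
  fixes \<Omega> :: "'a::euclidean_space set"
  assumes "open \<Omega>" "conditions_C \<Omega> \<phi>" "conditions_C \<Omega> \<psi>"
  shows "conditions_C \<Omega> (\<lambda>z x y. \<phi> (\<psi> z x y) x y)"
proof -
  obtain c1 c2 pm pp \<beta> where \<phi>: "nonneg_on \<Omega> \<phi>" "C1 \<Omega> \<phi>" "C2 \<Omega> \<phi>"
    and k: "0 < c1" "1 < c2" "1 < pm" "pm \<le> pp" "1 \<le> \<beta>"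
    and \<phi>_profile: "AE p in lebesgue_on (\<Omega> \<times> \<Omega>). admissible_profile (profile \<phi> p) c1 c2 pm pp \<beta>"
    using assms(2) by (rule conditions_CE)
  obtain c1' c2' pm' pp' \<beta>' where \<psi>: "nonneg_on \<Omega> \<psi>" "C1 \<Omega> \<psi>" "C2 \<Omega> \<psi>"
    and k': "0 < c1'" "1 < c2'" "1 < pm'" "pm' \<le> pp'" "1 \<le> \<beta>'"
    and \<psi>_profile: "AE p in lebesgue_on (\<Omega> \<times> \<Omega>). admissible_profile (profile \<psi> p) c1' c2' pm' pp' \<beta>'"
    using assms(3) by (rule conditions_CE)
  have "\<Omega> \<times> \<Omega> \<in> sets lborel" using open_Times[OF \<open>open \<Omega>\<close> \<open>open \<Omega>\<close>] by simp
  then have \<Omega>: "\<Omega> \<times> \<Omega> \<in> sets lebesgue" by (rule sets_completionI_sets)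
  have nonneg: "nonneg_on \<Omega> (\<lambda>z x y. \<phi> (\<psi> z x y) x y)"
    using \<phi>(1) \<psi>(1) unfolding nonneg_on_def by simp
  have "AE p in lebesgue_on (\<Omega> \<times> \<Omega>). \<forall>t>0. isCont (profile \<phi> p) t"
    using \<phi>_profile by eventually_elim (blast intro: admissible_profile_isCont)
  then have C1: "C1 \<Omega> (\<lambda>z x y. \<phi> (\<psi> z x y) x y)" by (rule C1_compose[OF \<Omega> \<phi>(2) \<psi>(2,1)])
  have C2: "C2 \<Omega> (\<lambda>z x y. \<phi> (\<psi> z x y) x y)"
    using k by (intro C2_compose[OF \<phi>(3) \<psi>(3) _ \<phi>_profile \<psi>_profile]) simp
  from \<phi>_profile \<psi>_profile have profile: "AE p in lebesgue_on (\<Omega> \<times> \<Omega>). admissible_profile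
      (profile (\<lambda>z x y. \<phi> (\<psi> z x y) x y) p) (c1 * c1' powr c2) (c2 * c2') (pm' * pm) (pp' * pp) (\<beta> * \<beta>' powr pp)"
  proof eventually_elim
    case (elim p)
    show ?case using admissible_profile_compose[OF elim] k k' by simp
  qed
  have "1 \<le> \<beta>' powr pp" using k k' by (intro ge_one_powr_ge_zero) auto
  then have "1 * 1 \<le> \<beta> * \<beta>' powr pp" using k by (intro mult_mono) auto
  moreover have "1 < c2 * c2'" "1 < pm' * pm" using k k' by (simp_all add: less_1_mult)
  moreover have "pm' * pm \<le> pp' * pp" using k k' by (intro mult_mono) auto
  ultimately show ?thesis using conditions_CI[OF nonneg C1 C2 _ _ _ _ _ profile] k k' by simp
qed

theorem theorem2p9:
  fixes \<Omega> :: "'a::euclidean_space set"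
    and \<phi> \<psi> :: "real \<Rightarrow> 'a \<Rightarrow> 'a \<Rightarrow> real"
    and b :: "'a \<Rightarrow> 'a \<Rightarrow> real" and c5 c6 :: real
  assumes "open \<Omega>" and "connected \<Omega>"
    and "conditions_C \<Omega> \<phi>" and "conditions_C \<Omega> \<psi>"
    and "(\<lambda>(x, y). b x y) \<in> borel_measurable (lebesgue_on (\<Omega> \<times> \<Omega>))"
    and "0 < c5" and "\<forall>x\<in>\<Omega>. \<forall>y\<in>\<Omega>. c5 < b x y \<and> b x y < c6"
  shows "conditions_C \<Omega> (\<lambda>z x y. \<phi> z x y + \<psi> z x y) \<and>
     conditions_C \<Omega> (\<lambda>z x y. \<phi> z x y * b x y) \<and>
     conditions_C \<Omega> (\<lambda>z x y. \<phi> z x y * \<psi> z x y) \<and>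
     conditions_C \<Omega> (\<lambda>z x y. \<phi> (\<psi> z x y) x y)"
  using conditions_C_add[OF assms(3,4)] conditions_C_mult_weight[OF assms(3,5,6,7)]
    conditions_C_mult[OF assms(3,4)] conditions_C_compose[OF assms(1,3,4)]
  by blast

end
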